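(* Let $\mathcal G$ be a shortest-path game such that $\mathrm{Val}^{\mathrm d}(v)\notin\{-\infty,+\infty\}$ and $\overline{\mathrm{Val}}^{\mathrm m}(v)\neq+\infty$ for all vertices $v$. The following are equivalent: (1) Min has an optimal memoryless deterministic strategy, i.e. a memoryless deterministic $\sigma^*$ with $\mathrm{Val}^{\sigma^*}(v)=\mathrm{Val}^{\mathrm d}(v)$ for all $v$; (2) Min has an optimal memoryless (randomised) strategy, i.e. a memoryless $\rho^*$ with $\mathrm{Val}^{\mathrm m,\rho^*}(v)=\overline{\mathrm{Val}}^{\mathrm m}(v)$ for all $v$; (3) $f^{(|V|-1)}_v=f^{(|V|)}_v=\mathrm{Val}^{\mathrm d}(v)$ for all vertices $v$, and in the game graph $\widetilde{\mathcal G}^{(|V|-1)}$ Min has a strategy guaranteeing to reach $T$ from every vertex, against every strategy of Max.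
   Context: A shortest-path game is $\mathcal G=(V_{\mathrm{Max}},V_{\mathrm{Min}},T,E,w)$ with finite $V=V_{\mathrm{Max}}\uplus V_{\mathrm{Min}}\uplus T$, edges $E\subseteq (V\setminus T)\times V$ with every non-target vertex having a successor, and integer weights $w\colon E\to\mathbb Z$. Plays from $v$ are finite paths ending at their first visit to $T$ (total payoff $\mathrm{TP}$ = sum of weights) or infinite paths avoiding $T$ ($\mathrm{TP}=+\infty$). Strategies of Min (resp. Max) map finite paths ending in $V_{\mathrm{Min}}$ (resp. $V_{\mathrm{Max}}$) to distributions on successors of the last vertex; deterministic = always Dirac, memoryless = depends only on the last vertex. For deterministic $\sigma,\tau$, $\mathrm{Val}^\sigma(v)=\sup_\tau\mathrm{TP}$ of the unique conforming play (over deterministic $\tau$), $\mathrm{Val}^{\mathrm d}(v)=\inf_\sigma\mathrm{Val}^\sigma(v)$. For memoryless $\rho,\tau$, $\mathbb E^{\rho,\tau}_v(\mathrm{TP})$ is the expected total payoff in the induced Markov chain; $\mathrm{Val}^{\mathrm m,\rho}(v)=\sup_\tau\mathbb E^{\rho,\tau}_v(\mathrm{TP})$ over memoryless $\tau$, $\overline{\mathrm{Val}}^{\mathrm m}(v)=\inf_\rho\mathrm{Val}^{\mathrm m,\rho}(v)$. Define $\mathcal F\colon(\mathbb Z\cup\{+\infty\})^V\to(\mathbb Z\cup\{+\infty\})^V$ by $\mathcal F(x)_v=0$ if $v\in T$, $\min_{v'\in E(v)}(w(v,v')+x_{v'})$ if $v\in V_{\mathrm{Min}}$, and $\max_{v'\in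 E(v)}(w(v,v')+x_{v'})$ if $v\in V_{\mathrm{Max}}$. Let $f^{(0)}_v=0$ for $v\in T$ and $+\infty$ otherwise, and $f^{(i)}=\mathcal F^i(f^{(0)})$. For $i\ge1$ and $v\in V_{\mathrm{Min}}$ let $\widetilde E^{(i)}(v)=\{v'\in E(v)\mid w(v,v')+f^{(i-1)}_{v'}=f^{(i)}_v\}$, and let $\widetilde{\mathcal G}^{(i)}$ be the game graph obtained from $\mathcal G$ by removing all edges $(v,v')$ with $v\in V_{\mathrm{Min}}$ and $v'\notin\widetilde E^{(i)}(v)$. *)

theory Defs
  imports "HOL-Probability.Probability"
begin

definition sp_game :: "'v set \<Rightarrow> 'v set \<Rightarrow> 'v set \<Rightarrow> ('v \<times> 'v) set \<Rightarrow> bool" where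
  "sp_game VMax VMin T E \<longleftrightarrow>
     VMax \<inter> VMin = {} \<and> VMax \<inter> T = {} \<and> VMin \<inter> T = {} \<and>
     VMax \<union> VMin \<union> T = UNIV \<and>
     E \<subseteq> (- T) \<times> UNIV \<and> (\<forall>v. v \<notin> T \<longrightarrow> E `` {v} \<noteq> {})"

definition det_strat :: "'v set \<Rightarrow> ('v \<times> 'v) set \<Rightarrow> ('v list \<Rightarrow> 'v) \<Rightarrow> bool" where
  "det_strat Vown E \<sigma> \<longleftrightarrow> (\<forall>h. h \<noteq> [] \<and> last h \<in> Vown \<longrightarrow> (last h, \<sigma> h) \<in> E)"

definition memoryless_det :: "('v list \<Rightarrow> 'v) \<Rightarrow> bool" where
  "memoryless_det \<sigma> \<longleftrightarrow> (\<exists>s. \<forall>h. h \<noteq> [] \<longrightarrow> \<sigma> h = s (last h))"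

fun play_hist :: "'v set \<Rightarrow> ('v list \<Rightarrow> 'v) \<Rightarrow> ('v list \<Rightarrow> 'v) \<Rightarrow> 'v \<Rightarrow> nat \<Rightarrow> 'v list" where
  "play_hist VMin \<sigma> \<tau> v 0 = [v]"
| "play_hist VMin \<sigma> \<tau> v (Suc n) =
     (let h = play_hist VMin \<sigma> \<tau> v n in h @ [if last h \<in> VMin then \<sigma> h else \<tau> h])"

definition play_vertex :: "'v set \<Rightarrow> ('v list \<Rightarrow> 'v) \<Rightarrow> ('v list \<Rightarrow> 'v) \<Rightarrow> 'v \<Rightarrow> nat \<Rightarrow> 'v" where
  "play_vertex VMin \<sigma> \<tau> v n = last (play_hist VMin \<sigma> \<tau> v n)"

definition TP_det :: "'v set \<Rightarrow> 'v set \<Rightarrow> ('v \<Rightarrow> 'v \<Rightarrow> int)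
    \<Rightarrow> ('v list \<Rightarrow> 'v) \<Rightarrow> ('v list \<Rightarrow> 'v) \<Rightarrow> 'v \<Rightarrow> ereal" where
  "TP_det VMin T w \<sigma> \<tau> v =
     (let p = play_vertex VMin \<sigma> \<tau> v in
      if \<exists>n. p n \<in> T
      then ereal (of_int (\<Sum>i < (LEAST n. p n \<in> T). w (p i) (p (Suc i))))
      else \<infinity>)"

definition Val_sigma :: "'v set \<Rightarrow> 'v set \<Rightarrow> 'v set \<Rightarrow> ('v \<times> 'v) set \<Rightarrow> ('v \<Rightarrow> 'v \<Rightarrow> int)
    \<Rightarrow> ('v list \<Rightarrow> 'v) \<Rightarrow> 'v \<Rightarrow> ereal" where
  "Val_sigma VMax VMin T E w \<sigma> v = (SUP \<tau> \<in> {\<tau>. det_strat VMax E \<tau>}. TP_det VMin T w \<sigma> \<tau> v)"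

definition Val_d :: "'v set \<Rightarrow> 'v set \<Rightarrow> 'v set \<Rightarrow> ('v \<times> 'v) set \<Rightarrow> ('v \<Rightarrow> 'v \<Rightarrow> int)
    \<Rightarrow> 'v \<Rightarrow> ereal" where
  "Val_d VMax VMin T E w v = (INF \<sigma> \<in> {\<sigma>. det_strat VMin E \<sigma>}. Val_sigma VMax VMin T E w \<sigma> v)"

definition mless_strat :: "'v set \<Rightarrow> ('v \<times> 'v) set \<Rightarrow> ('v \<Rightarrow> 'v pmf) \<Rightarrow> bool" where
  "mless_strat Vown E \<rho> \<longleftrightarrow> (\<forall>v \<in> Vown. set_pmf (\<rho> v) \<subseteq> E `` {v})"

definition fplays :: "'v set \<Rightarrow> ('v \<times> 'v) set \<Rightarrow> 'v \<Rightarrow> 'v list set" where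
  "fplays T E v = {\<pi>. \<pi> \<noteq> [] \<and> hd \<pi> = v \<and> last \<pi> \<in> T \<and>
      (\<forall>i < length \<pi> - 1. \<pi> ! i \<notin> T \<and> (\<pi> ! i, \<pi> ! Suc i) \<in> E)}"

definition path_prob :: "'v set \<Rightarrow> ('v \<Rightarrow> 'v pmf) \<Rightarrow> ('v \<Rightarrow> 'v pmf) \<Rightarrow> 'v list \<Rightarrow> real" where
  "path_prob VMin \<rho> \<tau> \<pi> =
     (\<Prod>i < length \<pi> - 1. pmf (if \<pi> ! i \<in> VMin then \<rho> (\<pi> ! i) else \<tau> (\<pi> ! i)) (\<pi> ! Suc i))"

definition path_weight :: "('v \<Rightarrow> 'v \<Rightarrow> int) \<Rightarrow> 'v list \<Rightarrow> int" where
  "path_weight w \<pi> = (\<Sum>i < length \<pi> - 1. w (\<pi> ! i) (\<pi> ! Suc i))"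

definition reach_prob :: "'v set \<Rightarrow> 'v set \<Rightarrow> ('v \<times> 'v) set
    \<Rightarrow> ('v \<Rightarrow> 'v pmf) \<Rightarrow> ('v \<Rightarrow> 'v pmf) \<Rightarrow> 'v \<Rightarrow> ennreal" where
  "reach_prob VMin T E \<rho> \<tau> v =
     (\<integral>\<^sup>+ \<pi>. ennreal (path_prob VMin \<rho> \<tau> \<pi>) \<partial>count_space (fplays T E v))"

text \<open>Expected total payoff (TP = +\<infinity> on plays never reaching T): +\<infinity> if T is
  reached with probability < 1, otherwise the expectation of the payoff of the
  (almost surely finite) play, as positive part minus negative part.\<close>

definition exp_TP :: "'v set \<Rightarrow> 'v set \<Rightarrow> ('v \<times> 'v) set \<Rightarrow> ('v \<Rightarrow> 'v \<Rightarrow> int)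
    \<Rightarrow> ('v \<Rightarrow> 'v pmf) \<Rightarrow> ('v \<Rightarrow> 'v pmf) \<Rightarrow> 'v \<Rightarrow> ereal" where
  "exp_TP VMin T E w \<rho> \<tau> v =
     (if reach_prob VMin T E \<rho> \<tau> v < 1 then \<infinity>
      else enn2ereal (\<integral>\<^sup>+ \<pi>. ennreal (path_prob VMin \<rho> \<tau> \<pi> * max 0 (real_of_int (path_weight w \<pi>)))
                        \<partial>count_space (fplays T E v))
         - enn2ereal (\<integral>\<^sup>+ \<pi>. ennreal (path_prob VMin \<rho> \<tau> \<pi> * max 0 (- real_of_int (path_weight w \<pi>)))
                        \<partial>count_space (fplays T E v)))"

definition Val_m_rho :: "'v set \<Rightarrow> 'v set \<Rightarrow> 'v set \<Rightarrow> ('v \<times> 'v) set \<Rightarrow> ('v \<Rightarrow> 'v \<Rightarrow> int)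
    \<Rightarrow> ('v \<Rightarrow> 'v pmf) \<Rightarrow> 'v \<Rightarrow> ereal" where
  "Val_m_rho VMax VMin T E w \<rho> v = (SUP \<tau> \<in> {\<tau>. mless_strat VMax E \<tau>}. exp_TP VMin T E w \<rho> \<tau> v)"

definition Val_m_bar :: "'v set \<Rightarrow> 'v set \<Rightarrow> 'v set \<Rightarrow> ('v \<times> 'v) set \<Rightarrow> ('v \<Rightarrow> 'v \<Rightarrow> int)
    \<Rightarrow> 'v \<Rightarrow> ereal" where
  "Val_m_bar VMax VMin T E w v = (INF \<rho> \<in> {\<rho>. mless_strat VMin E \<rho>}. Val_m_rho VMax VMin T E w \<rho> v)"

definition F_op :: "'v set \<Rightarrow> 'v set \<Rightarrow> ('v \<times> 'v) set \<Rightarrow> ('v \<Rightarrow> 'v \<Rightarrow> int)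
    \<Rightarrow> ('v \<Rightarrow> ereal) \<Rightarrow> 'v \<Rightarrow> ereal" where
  "F_op VMin T E w x v =
     (if v \<in> T then 0
      else if v \<in> VMin then Min ((\<lambda>v'. ereal (of_int (w v v')) + x v') ` (E `` {v}))
      else Max ((\<lambda>v'. ereal (of_int (w v v')) + x v') ` (E `` {v})))"

definition f_iter :: "'v set \<Rightarrow> 'v set \<Rightarrow> ('v \<times> 'v) set \<Rightarrow> ('v \<Rightarrow> 'v \<Rightarrow> int)
    \<Rightarrow> nat \<Rightarrow> 'v \<Rightarrow> ereal" where
  "f_iter VMin T E w i = (F_op VMin T E w ^^ i) (\<lambda>v. if v \<in> T then 0 else \<infinity>)"

definition Etilde :: "'v set \<Rightarrow> 'v set \<Rightarrow> ('v \<times> 'v) set \<Rightarrow> ('v \<Rightarrow> 'v \<Rightarrow> int)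
    \<Rightarrow> nat \<Rightarrow> 'v \<Rightarrow> 'v set" where
  "Etilde VMin T E w i v =
     {v' \<in> E `` {v}. ereal (of_int (w v v')) + f_iter VMin T E w (i - 1) v' = f_iter VMin T E w i v}"

definition Gtilde_edges :: "'v set \<Rightarrow> 'v set \<Rightarrow> ('v \<times> 'v) set \<Rightarrow> ('v \<Rightarrow> 'v \<Rightarrow> int)
    \<Rightarrow> nat \<Rightarrow> ('v \<times> 'v) set" where
  "Gtilde_edges VMin T E w i = {(v, v') \<in> E. v \<in> VMin \<longrightarrow> v' \<in> Etilde VMin T E w i v}"

end

theory Submission
  imports Defs
begin

text \<open>Each of the three conditions is equivalent to the existence of an optimality witness: a real
  potential \<open>\<phi>\<close> solving the Bellman equations (\<open>\<phi> = 0\<close> on \<open>T\<close>, the minimum of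
  \<open>w x y + \<phi> y\<close> over the successors \<open>y\<close> of a Min vertex \<open>x\<close>, the maximum at a Max vertex),
  together with a memoryless Min choice \<open>s\<close> that is tight for \<open>\<phi>\<close> and admits an attractor ranking,
  so that it forces every play into \<open>T\<close>. Telescoping \<open>\<phi>\<close> along plays shows that \<open>s\<close> is an optimal
  deterministic strategy, and a maximum principle for the Markov chains induced by \<open>s\<close> and memoryless
  Max strategies shows that it is an optimal memoryless strategy; both values equal \<open>\<phi>\<close>.

  Conversely, an optimal memoryless deterministic strategy reaches \<open>T\<close> within \<open>|V| - 1\<close> steps, so
  playing it against Max's greedy strategy for the horizon \<open>|V| - 1\<close> gives
  \<open>f_iter (|V| - 1) \<le> Val_d\<close>: the iterates have stabilised at \<open>Val_d\<close>, and the strategy only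
  uses edges of the restricted graph. In that graph the attractor of \<open>T\<close> yields a witness with
  \<open>\<phi> = Val_d\<close>. For an optimal memoryless \<open>\<rho>\<close>, let \<open>\<phi>\<close> be its
  value against Max's best deterministic memoryless reply. It satisfies Max's Bellman equations, and
  no Min edge improves on it, since mixing such an edge into \<open>\<rho>\<close> would beat the optimal value; hence
  every edge in the support of \<open>\<rho>\<close> is tight, and the attractor of \<open>T\<close> within that support gives
  \<open>s\<close>.\<close>

section \<open>Plays and total payoff\<close>

lemma play_vertex_0 [simp]: "play_vertex VMin \<sigma> \<tau> v 0 = v"
  by (simp add: play_vertex_def)

lemma last_play_hist: "last (play_hist VMin \<sigma> \<tau> v n) = play_vertex VMin \<sigma> \<tau> v n"
  by (simp add: play_vertex_def)

lemma play_hist_not_Nil [simp]: "play_hist VMin \<sigma> \<tau> v n \<noteq> []"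
  by (cases n) (simp_all add: Let_def)

lemma length_play_hist [simp]: "length (play_hist VMin \<sigma> \<tau> v n) = Suc n"
  by (induction n) (simp_all add: Let_def)

lemma play_vertex_Suc:
  "play_vertex VMin \<sigma> \<tau> v (Suc n) =
    (if play_vertex VMin \<sigma> \<tau> v n \<in> VMin then \<sigma> (play_hist VMin \<sigma> \<tau> v n)
     else \<tau> (play_hist VMin \<sigma> \<tau> v n))"
  by (simp add: play_vertex_def Let_def)

lemma play_vertex_Suc_memoryless:
  assumes "\<And>h. h \<noteq> [] \<Longrightarrow> \<sigma> h = s (last h)" and "play_vertex VMin \<sigma> \<tau> v n \<in> VMin"
  shows "play_vertex VMin \<sigma> \<tau> v (Suc n) = s (play_vertex VMin \<sigma> \<tau> v n)"
  using assms by (simp add: play_vertex_Suc last_play_hist)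

lemma TP_det_first_hit:
  assumes "play_vertex VMin \<sigma> \<tau> v N \<in> T" and "\<forall>j<N. play_vertex VMin \<sigma> \<tau> v j \<notin> T"
  shows "TP_det VMin T w \<sigma> \<tau> v =
     ereal (of_int (\<Sum>i<N. w (play_vertex VMin \<sigma> \<tau> v i) (play_vertex VMin \<sigma> \<tau> v (Suc i))))"
proof -
  have "(LEAST n. play_vertex VMin \<sigma> \<tau> v n \<in> T) = N"
    using assms by (intro Least_equality) (auto simp: not_le[symmetric])
  then show ?thesis
    unfolding TP_det_def Let_def using assms by auto
qed

lemma TP_det_never_hit:
  "\<forall>n. play_vertex VMin \<sigma> \<tau> v n \<notin> T \<Longrightarrow> TP_det VMin T w \<sigma> \<tau> v = \<infinity>"
  unfolding TP_det_def Let_def by auto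

lemma first_hit_le_rank:
  fixes p :: "nat \<Rightarrow> 'v" and rk :: "'v \<Rightarrow> nat"
  assumes rk0: "\<forall>x. rk x = 0 \<longleftrightarrow> x \<in> T"
    and dec: "\<forall>j. p j \<notin> T \<longrightarrow> rk (p (Suc j)) < rk (p j)"
  shows "\<exists>N \<le> rk (p 0). p N \<in> T \<and> (\<forall>j<N. p j \<notin> T)"
proof -
  have rk_drop: "(\<forall>i<j. p i \<notin> T) \<longrightarrow> rk (p j) + j \<le> rk (p 0)" for j
  proof (induction j)
    case (Suc j)
    then show ?case
      using dec by (metis Suc_leI add_Suc_right add_less_mono1 less_Suc_eq order_less_le_trans)
  qed simp
  have "\<exists>i\<le>rk (p 0). p i \<in> T"
  proof (rule ccontr)
    assume "\<not> ?thesis"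
    then have "\<forall>i<Suc (rk (p 0)). p i \<notin> T" by auto
    then show False using rk_drop[of "Suc (rk (p 0))"] by simp
  qed
  then obtain i where i: "i \<le> rk (p 0)" "p i \<in> T" by blast
  define N where "N = (LEAST n. p n \<in> T)"
  have "p N \<in> T" "N \<le> i" "\<forall>j<N. p j \<notin> T"
    unfolding N_def using i by (auto intro: LeastI Least_le dest: not_less_Least)
  then show ?thesis using i by (intro exI[of _ N]) auto
qed

lemma telescope_le:
  fixes p :: "nat \<Rightarrow> 'v" and \<phi> :: "'v \<Rightarrow> real" and w :: "'v \<Rightarrow> 'v \<Rightarrow> int"
  assumes "\<forall>j<N. real_of_int (w (p j) (p (Suc j))) + \<phi> (p (Suc j)) \<le> \<phi> (p j)"
  shows "real_of_int (\<Sum>j<N. w (p j) (p (Suc j))) + \<phi> (p N) \<le> \<phi> (p 0)"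
  using assms
proof (induction N)
  case (Suc N)
  then have "real_of_int (\<Sum>j<N. w (p j) (p (Suc j))) + \<phi> (p N) \<le> \<phi> (p 0)"
    and "real_of_int (w (p N) (p (Suc N))) + \<phi> (p (Suc N)) \<le> \<phi> (p N)"
    by auto
  then show ?case by simp
qed simp

lemma telescope_ge:
  fixes p :: "nat \<Rightarrow> 'v" and \<phi> :: "'v \<Rightarrow> real" and w :: "'v \<Rightarrow> 'v \<Rightarrow> int"
  assumes "\<forall>j<N. \<phi> (p j) \<le> real_of_int (w (p j) (p (Suc j))) + \<phi> (p (Suc j))"
  shows "\<phi> (p 0) \<le> real_of_int (\<Sum>j<N. w (p j) (p (Suc j))) + \<phi> (p N)"
  using assms
proof (induction N)
  case (Suc N)
  then have "\<phi> (p 0) \<le> real_of_int (\<Sum>j<N. w (p j) (p (Suc j))) + \<phi> (p N)"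
    and "\<phi> (p N) \<le> real_of_int (w (p N) (p (Suc N))) + \<phi> (p (Suc N))"
    by auto
  then show ?case by simp
qed simp

section \<open>Attractors\<close>

locale spg =
  fixes VMax VMin T :: "'v::finite set" and E :: "('v \<times> 'v) set" and w :: "'v \<Rightarrow> 'v \<Rightarrow> int"
  assumes game: "sp_game VMax VMin T E"
begin

lemma VMax_iff: "x \<in> VMax \<longleftrightarrow> x \<notin> VMin \<and> x \<notin> T"
  using game unfolding sp_game_def by blast

lemma VMin_not_T: "x \<in> VMin \<Longrightarrow> x \<notin> T"
  using game unfolding sp_game_def by blast

lemma successor_exists: "x \<notin> T \<Longrightarrow> \<exists>y. (x, y) \<in> E"
  using game unfolding sp_game_def by blast

lemma play_edge_Max:
  assumes "det_strat VMax E \<tau>" and "play_vertex VMin \<sigma> \<tau> v n \<in> VMax"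
  shows "(play_vertex VMin \<sigma> \<tau> v n, play_vertex VMin \<sigma> \<tau> v (Suc n)) \<in> E"
  using assms(2) VMax_iff spec[OF assms(1)[unfolded det_strat_def], of "play_hist VMin \<sigma> \<tau> v n"]
  by (simp add: play_vertex_Suc last_play_hist)

lemma play_edge:
  assumes "det_strat VMin E \<sigma>" and "det_strat VMax E \<tau>" and "play_vertex VMin \<sigma> \<tau> v n \<notin> T"
  shows "(play_vertex VMin \<sigma> \<tau> v n, play_vertex VMin \<sigma> \<tau> v (Suc n)) \<in> E"
proof (cases "play_vertex VMin \<sigma> \<tau> v n \<in> VMin")
  case True
  then show ?thesis
    using spec[OF assms(1)[unfolded det_strat_def], of "play_hist VMin \<sigma> \<tau> v n"]
    by (simp add: play_vertex_Suc last_play_hist)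
next
  case False
  then show ?thesis using assms(2,3) play_edge_Max VMax_iff by blast
qed

primrec attractor_layer :: "('v \<Rightarrow> 'v set) \<Rightarrow> nat \<Rightarrow> 'v set" where
  "attractor_layer C 0 = T"
| "attractor_layer C (Suc k) = attractor_layer C k
      \<union> {u \<in> VMin. C u \<inter> attractor_layer C k \<noteq> {}}
      \<union> {x \<in> VMax. E `` {x} \<subseteq> attractor_layer C k}"

definition trap :: "('v \<Rightarrow> 'v set) \<Rightarrow> 'v set \<Rightarrow> bool" where
  "trap C X \<longleftrightarrow> X \<inter> T = {} \<and> (\<forall>u \<in> X \<inter> VMin. C u \<subseteq> X) \<and> (\<forall>x \<in> X \<inter> VMax. \<exists>y \<in> X. (x, y) \<in> E)"

definition attractor_ranking :: "('v \<Rightarrow> 'v) \<Rightarrow> ('v \<Rightarrow> nat) \<Rightarrow> bool" where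
  "attractor_ranking s rk \<longleftrightarrow> (\<forall>x. rk x = 0 \<longleftrightarrow> x \<in> T) \<and> (\<forall>u \<in> VMin. rk (s u) < rk u)
     \<and> (\<forall>x \<in> VMax. \<forall>y. (x, y) \<in> E \<longrightarrow> rk y < rk x)"

lemma attractor_layer_mono:
  assumes "k \<le> m"
  shows "attractor_layer C k \<subseteq> attractor_layer C m"
proof -
  have "attractor_layer C n \<subseteq> attractor_layer C (Suc n)" for n by auto
  then show ?thesis by (rule lift_Suc_mono_le[of "attractor_layer C", OF _ assms])
qed

lemma attractor_layers_exhaust:
  assumes "\<forall>X. trap C X \<longrightarrow> X = {}"
  shows "\<exists>k. x \<in> attractor_layer C k"
proof -
  define X where "X = {x. \<forall>k. x \<notin> attractor_layer C k}"
  have "\<exists>y\<in>X. (x, y) \<in> E" if x: "x \<in> X \<inter> VMax" for x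
  proof (rule ccontr)
    assume "\<not> ?thesis"
    then have H: "\<forall>y\<in>E `` {x}. \<exists>k. y \<in> attractor_layer C k" unfolding X_def by auto
    define K where "K = Max ((\<lambda>y. LEAST k. y \<in> attractor_layer C k) ` (E `` {x}))"
    have "E `` {x} \<subseteq> attractor_layer C K"
    proof
      fix y assume y: "y \<in> E `` {x}"
      then have "y \<in> attractor_layer C (LEAST k. y \<in> attractor_layer C k)" using H by (meson LeastI)
      moreover have "(LEAST k. y \<in> attractor_layer C k) \<le> K" unfolding K_def using y by simp
      ultimately show "y \<in> attractor_layer C K" using attractor_layer_mono by blast
    qed
    then have "x \<in> attractor_layer C (Suc K)" using x by auto
    then show False using x unfolding X_def by blast
  qed
  moreover have "X \<inter> T = {}" unfolding X_def by (auto dest: spec[of _ 0])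
  moreover have "C u \<subseteq> X" if u: "u \<in> X \<inter> VMin" for u
  proof
    fix y assume y: "y \<in> C u"
    show "y \<in> X"
    proof (rule ccontr)
      assume "y \<notin> X"
      then obtain k where "y \<in> attractor_layer C k" unfolding X_def by auto
      then have "u \<in> attractor_layer C (Suc k)" using u y by auto
      then show False using u unfolding X_def by blast
    qed
  qed
  ultimately have "trap C X" unfolding trap_def by blast
  then show ?thesis using assms unfolding X_def by auto
qed

lemma attractor_layer_card:
  assumes "x \<in> attractor_layer C k"
  shows "x \<in> attractor_layer C (CARD('v) - 1)"
proof -
  define r where "r = (LEAST k. x \<in> attractor_layer C k)"
  have x_r: "x \<in> attractor_layer C r" unfolding r_def using assms by (rule LeastI)
  have T_nonempty: "T \<noteq> {}"
  proof
    assume T: "T = {}"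
    have "attractor_layer C k = {}" for k
    proof (induction k)
      case (Suc k)
      have "\<not> E `` {x} \<subseteq> {}" if "x \<in> VMax" for x
        using that successor_exists VMax_iff by blast
      then show ?case using Suc by auto
    qed (unfold attractor_layer.simps(1), fact T)
    then show False using assms by blast
  qed
  have stable: "attractor_layer C (j + d) = attractor_layer C j"
    if "attractor_layer C (Suc j) = attractor_layer C j" for j d
    using that by (induction d) simp_all
  have strict: "attractor_layer C j \<subset> attractor_layer C (Suc j)" if j: "j < r" for j
  proof (rule ccontr)
    assume "\<not> ?thesis"
    then have "attractor_layer C (Suc j) = attractor_layer C j" by auto
    then have "x \<in> attractor_layer C j" using stable[of j "r - j"] x_r j by simp
    then show False using j unfolding r_def by (auto dest: not_less_Least)
  qed
  have "j \<le> r \<Longrightarrow> j + card T \<le> card (attractor_layer C j)" for j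
  proof (induction j)
    case (Suc j)
    then have "card (attractor_layer C j) < card (attractor_layer C (Suc j))"
      using strict by (intro psubset_card_mono) auto
    then show ?case using Suc by simp
  qed simp
  then have "r + card T \<le> card (attractor_layer C r)" by simp
  moreover have "card (attractor_layer C r) \<le> CARD('v)" by (rule card_mono) auto
  moreover have "card T \<ge> 1" using T_nonempty by (simp add: Suc_leI card_gt_0_iff)
  ultimately have "r \<le> CARD('v) - 1" by simp
  then show ?thesis using x_r attractor_layer_mono by blast
qed

lemma attractor_ranking_exists:
  assumes "\<forall>X. trap C X \<longrightarrow> X = {}"
  shows "\<exists>s rk. attractor_ranking s rk \<and> (\<forall>u \<in> VMin. s u \<in> C u) \<and> (\<forall>x. rk x < CARD('v))"
proof -
  define rk where "rk x = (LEAST k. x \<in> attractor_layer C k)" for x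
  have rk_in: "x \<in> attractor_layer C (rk x)" for x
    unfolding rk_def using attractor_layers_exhaust[OF assms] by (meson LeastI)
  have rk_le: "x \<in> attractor_layer C k \<Longrightarrow> rk x \<le> k" for x k
    unfolding rk_def by (simp add: Least_le)
  have rk0: "rk x = 0 \<longleftrightarrow> x \<in> T" for x
    using rk_in[of x] rk_le[of x 0] by auto
  have rk_Suc: "rk x = Suc r \<Longrightarrow> x \<notin> attractor_layer C r" for x r
    using rk_le[of x r] by auto
  define s where "s u = (SOME y. y \<in> C u \<inter> attractor_layer C (rk u - 1))" for u
  have s: "s u \<in> C u \<and> rk (s u) < rk u" if u: "u \<in> VMin" for u
  proof -
    obtain r where r: "rk u = Suc r" using rk0 VMin_not_T[OF u] by (metis not0_implies_Suc)
    then have "C u \<inter> attractor_layer C r \<noteq> {}" using u rk_in[of u] rk_Suc[of u] VMax_iff by auto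
    then have "\<exists>y. y \<in> C u \<inter> attractor_layer C r" by blast
    then have "s u \<in> C u \<inter> attractor_layer C r" unfolding s_def r by (simp only: diff_Suc_1) (rule someI_ex)
    then show ?thesis using rk_le r by fastforce
  qed
  have "rk y < rk x" if x: "x \<in> VMax" and y: "(x, y) \<in> E" for x y
  proof -
    obtain r where r: "rk x = Suc r" using rk0 x VMax_iff by (metis not0_implies_Suc)
    then have "E `` {x} \<subseteq> attractor_layer C r" using x rk_in[of x] rk_Suc[of x] VMax_iff by auto
    then show ?thesis using y rk_le r by fastforce
  qed
  moreover have "rk x < CARD('v)" for x
  proof -
    have "0 < CARD('v)" by simp
    then show ?thesis using rk_le[OF attractor_layer_card[OF rk_in[of x]]] by linarith
  qed
  ultimately show ?thesis using rk0 s unfolding attractor_ranking_def by blast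
qed

lemma trap_Max_choice:
  assumes "trap C X"
  obtains t where "\<And>x. x \<in> VMax \<Longrightarrow> (x, t x) \<in> E \<and> (x \<in> X \<longrightarrow> t x \<in> X)"
proof -
  have "\<exists>y. (x, y) \<in> E \<and> (x \<in> X \<longrightarrow> y \<in> X)" if "x \<in> VMax" for x
    using assms that successor_exists VMax_iff unfolding trap_def by (cases "x \<in> X") blast+
  then show ?thesis using that by metis
qed

lemma trap_escape_strategy:
  assumes "trap C X" and "v \<in> X"
    and \<sigma>C: "\<forall>h. h \<noteq> [] \<longrightarrow> last h \<in> VMin \<longrightarrow> \<sigma> h \<in> C (last h)"
  shows "\<exists>\<tau>. det_strat VMax E \<tau> \<and> (\<forall>n. play_vertex VMin \<sigma> \<tau> v n \<in> X)"
proof -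
  obtain t where t: "\<And>x. x \<in> VMax \<Longrightarrow> (x, t x) \<in> E \<and> (x \<in> X \<longrightarrow> t x \<in> X)"
    using trap_Max_choice[OF assms(1)] by blast
  define \<tau> where "\<tau> h = t (last h)" for h :: "'v list"
  have "det_strat VMax E \<tau>" unfolding det_strat_def \<tau>_def using t by blast
  moreover have "play_vertex VMin \<sigma> \<tau> v n \<in> X" for n
  proof (induction n)
    case (Suc n)
    let ?x = "play_vertex VMin \<sigma> \<tau> v n"
    show ?case
    proof (cases "?x \<in> VMin")
      case True
      then have "\<sigma> (play_hist VMin \<sigma> \<tau> v n) \<in> C ?x"
        using \<sigma>C[rule_format, of "play_hist VMin \<sigma> \<tau> v n"] by (simp add: last_play_hist)
      then show ?thesis using True Suc assms(1) unfolding trap_def by (auto simp: play_vertex_Suc)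
    next
      case False
      then have "?x \<in> VMax" using Suc assms(1) VMax_iff unfolding trap_def by blast
      moreover have "\<tau> (play_hist VMin \<sigma> \<tau> v n) = t ?x" by (simp add: \<tau>_def last_play_hist)
      ultimately show ?thesis using False Suc t by (simp add: play_vertex_Suc)
    qed
  qed (use assms(2) in simp)
  ultimately show ?thesis by blast
qed

lemma reaching_strategy_ranking:
  assumes \<sigma>C: "\<forall>h. h \<noteq> [] \<longrightarrow> last h \<in> VMin \<longrightarrow> \<sigma> h \<in> C (last h)"
    and reach: "\<And>\<tau> v. det_strat VMax E \<tau> \<Longrightarrow> \<exists>n. play_vertex VMin \<sigma> \<tau> v n \<in> T"
  shows "\<exists>s rk. attractor_ranking s rk \<and> (\<forall>u \<in> VMin. s u \<in> C u) \<and> (\<forall>x. rk x < CARD('v))"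
proof (rule attractor_ranking_exists, intro allI impI)
  fix X assume X: "trap C X"
  show "X = {}"
  proof (rule ccontr)
    assume "X \<noteq> {}"
    then obtain v where "v \<in> X" by blast
    then obtain \<tau> where "det_strat VMax E \<tau>" "\<forall>n. play_vertex VMin \<sigma> \<tau> v n \<in> X"
      using trap_escape_strategy[OF X _ \<sigma>C] by blast
    then show False using reach X unfolding trap_def by blast
  qed
qed

lemma ranked_play_first_hit:
  assumes "attractor_ranking s rk" and "\<And>h. h \<noteq> [] \<Longrightarrow> \<sigma> h = s (last h)"
    and "det_strat VMax E \<tau>"
  shows "\<exists>N \<le> rk v. play_vertex VMin \<sigma> \<tau> v N \<in> T \<and> (\<forall>j<N. play_vertex VMin \<sigma> \<tau> v j \<notin> T)"
proof -
  let ?p = "play_vertex VMin \<sigma> \<tau> v"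
  have "rk (?p (Suc j)) < rk (?p j)" if "?p j \<notin> T" for j
  proof (cases "?p j \<in> VMin")
    case True
    then show ?thesis using assms(1,2) play_vertex_Suc_memoryless unfolding attractor_ranking_def
      by metis
  next
    case False
    then have "?p j \<in> VMax" using that VMax_iff by blast
    then show ?thesis using assms(1) play_edge_Max[OF assms(3)] unfolding attractor_ranking_def
      by blast
  qed
  then show ?thesis using first_hit_le_rank[where rk = rk and p = ?p] assms(1) unfolding attractor_ranking_def
    by auto
qed

section \<open>The operator F and its iterates\<close>

lemma f_iter_Suc: "f_iter VMin T E w (Suc i) = F_op VMin T E w (f_iter VMin T E w i)"
  by (simp add: f_iter_def)

lemma f_iter_0: "f_iter VMin T E w 0 x = (if x \<in> T then 0 else \<infinity>)"
  by (simp add: f_iter_def)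

lemma f_iter_T: "x \<in> T \<Longrightarrow> f_iter VMin T E w i x = 0"
  by (cases i) (simp_all add: f_iter_0 f_iter_Suc F_op_def)

lemma F_op_Min_le:
  assumes "u \<in> VMin" and "(u, y) \<in> E"
  shows "F_op VMin T E w a u \<le> ereal (of_int (w u y)) + a y"
  using assms VMin_not_T[OF assms(1)] unfolding F_op_def by (auto intro!: Min_le)

lemma F_op_Max_ge:
  assumes "x \<in> VMax" and "(x, y) \<in> E"
  shows "ereal (of_int (w x y)) + a y \<le> F_op VMin T E w a x"
  using assms VMax_iff unfolding F_op_def by (auto intro!: Max_ge)

lemma F_op_attained:
  assumes "x \<notin> T"
  shows "\<exists>y. (x, y) \<in> E \<and> ereal (of_int (w x y)) + a y = F_op VMin T E w a x"
proof -
  let ?vals = "(\<lambda>y. ereal (of_int (w x y)) + a y) ` (E `` {x})"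
  have "E `` {x} \<noteq> {}" using successor_exists[OF assms] by auto
  then have "Min ?vals \<in> ?vals" "Max ?vals \<in> ?vals" by (auto intro!: Min_in Max_in)
  then show ?thesis using assms unfolding F_op_def by auto
qed

lemma F_op_mono:
  assumes "\<And>y. a y \<le> b y"
  shows "F_op VMin T E w a x \<le> F_op VMin T E w b x"
proof (cases "x \<in> T")
  case True
  then show ?thesis by (simp add: F_op_def)
next
  case x: False
  show ?thesis
  proof (cases "x \<in> VMin")
    case True
    obtain y where y: "(x, y) \<in> E" "ereal (of_int (w x y)) + b y = F_op VMin T E w b x"
      using F_op_attained[OF x] by blast
    have "F_op VMin T E w a x \<le> ereal (of_int (w x y)) + a y" using F_op_Min_le[OF True y(1)] .
    also have "\<dots> \<le> ereal (of_int (w x y)) + b y" using assms by (simp add: add_left_mono)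
    finally show ?thesis using y by simp
  next
    case False
    then have "x \<in> VMax" using x VMax_iff by blast
    obtain y where y: "(x, y) \<in> E" "ereal (of_int (w x y)) + a y = F_op VMin T E w a x"
      using F_op_attained[OF x] by blast
    have "ereal (of_int (w x y)) + a y \<le> ereal (of_int (w x y)) + b y"
      using assms by (simp add: add_left_mono)
    also have "\<dots> \<le> F_op VMin T E w b x" using F_op_Max_ge[OF \<open>x \<in> VMax\<close> y(1)] .
    finally show ?thesis using y by simp
  qed
qed

lemma f_iter_Suc_le: "f_iter VMin T E w (Suc i) x \<le> f_iter VMin T E w i x"
proof (induction i arbitrary: x)
  case 0
  show ?case by (cases "x \<in> T") (simp_all add: f_iter_T f_iter_0)
next
  case (Suc i)
  show ?case unfolding f_iter_Suc[of "Suc i"] f_iter_Suc[of i]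
    using Suc by (intro F_op_mono) (simp add: f_iter_Suc)
qed

lemma f_iter_antimono: "i \<le> j \<Longrightarrow> f_iter VMin T E w j x \<le> f_iter VMin T E w i x"
  by (induction j rule: dec_induct) (auto intro: order_trans[OF f_iter_Suc_le])

text \<open>Both players move greedily with respect to the iterate for the remaining horizon: after a
  history \<open>h\<close> of \<open>length h - 1\<close> steps, \<open>k - length h + 1\<close> steps remain.\<close>

definition horizon_strat :: "nat \<Rightarrow> 'v list \<Rightarrow> 'v" where
  "horizon_strat k h = (SOME y. (last h, y) \<in> E \<and>
     ereal (of_int (w (last h) y)) + f_iter VMin T E w (k - length h) y
       = f_iter VMin T E w (Suc (k - length h)) (last h))"

lemma horizon_strat:
  assumes "last h \<notin> T"
  shows "(last h, horizon_strat k h) \<in> E \<and>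
    ereal (of_int (w (last h) (horizon_strat k h))) + f_iter VMin T E w (k - length h) (horizon_strat k h)
      = f_iter VMin T E w (Suc (k - length h)) (last h)"
  unfolding horizon_strat_def f_iter_Suc
  using F_op_attained[OF assms, of "f_iter VMin T E w (k - length h)"] by (rule someI_ex)

lemma horizon_strat_Min: "det_strat VMin E (horizon_strat k)"
  unfolding det_strat_def using horizon_strat VMin_not_T by blast

lemma horizon_strat_Max: "det_strat VMax E (horizon_strat k)"
  unfolding det_strat_def using horizon_strat VMax_iff by blast

lemma horizon_strat_Min_step:
  assumes \<tau>: "det_strat VMax E \<tau>" and j: "j < k"
    and not_T: "play_vertex VMin (horizon_strat k) \<tau> v j \<notin> T"
  shows "ereal (of_int (w (play_vertex VMin (horizon_strat k) \<tau> v j)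
            (play_vertex VMin (horizon_strat k) \<tau> v (Suc j))))
          + f_iter VMin T E w (k - Suc j) (play_vertex VMin (horizon_strat k) \<tau> v (Suc j))
       \<le> f_iter VMin T E w (k - j) (play_vertex VMin (horizon_strat k) \<tau> v j)"
proof -
  let ?p = "play_vertex VMin (horizon_strat k) \<tau> v" and ?h = "play_hist VMin (horizon_strat k) \<tau> v j"
  have k_j: "k - length ?h = k - Suc j" "Suc (k - Suc j) = k - j" using j by auto
  show ?thesis
  proof (cases "?p j \<in> VMin")
    case True
    then show ?thesis using horizon_strat[of ?h k] not_T k_j by (simp add: play_vertex_Suc last_play_hist)
  next
    case False
    then have "?p j \<in> VMax" using not_T VMax_iff by blast
    then show ?thesis using F_op_Max_ge[OF _ play_edge_Max[OF \<tau>]] k_j(2) f_iter_Suc by metis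
  qed
qed

lemma horizon_strat_Max_step:
  assumes \<sigma>: "det_strat VMin E \<sigma>" and j: "j < k"
    and not_T: "play_vertex VMin \<sigma> (horizon_strat k) v j \<notin> T"
  shows "f_iter VMin T E w (k - j) (play_vertex VMin \<sigma> (horizon_strat k) v j)
       \<le> ereal (of_int (w (play_vertex VMin \<sigma> (horizon_strat k) v j)
            (play_vertex VMin \<sigma> (horizon_strat k) v (Suc j))))
          + f_iter VMin T E w (k - Suc j) (play_vertex VMin \<sigma> (horizon_strat k) v (Suc j))"
proof -
  let ?p = "play_vertex VMin \<sigma> (horizon_strat k) v" and ?h = "play_hist VMin \<sigma> (horizon_strat k) v j"
  have k_j: "k - length ?h = k - Suc j" "Suc (k - Suc j) = k - j" using j by auto
  show ?thesis
  proof (cases "?p j \<in> VMin")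
    case True
    then show ?thesis
      using F_op_Min_le[OF _ play_edge[OF \<sigma> horizon_strat_Max not_T]] k_j(2) f_iter_Suc by metis
  next
    case False
    then show ?thesis using horizon_strat[of ?h k] not_T k_j by (simp add: play_vertex_Suc last_play_hist)
  qed
qed

lemma TP_det_horizon_strat_le:
  assumes \<tau>: "det_strat VMax E \<tau>"
  shows "TP_det VMin T w (horizon_strat k) \<tau> v \<le> f_iter VMin T E w k v"
proof -
  let ?p = "play_vertex VMin (horizon_strat k) \<tau> v"
  let ?S = "\<lambda>j. ereal (of_int (\<Sum>i<j. w (?p i) (?p (Suc i))))"
  let ?f = "f_iter VMin T E w"
  have S_Suc: "?S (Suc i) = ?S i + ereal (of_int (w (?p i) (?p (Suc i))))" for i by simp
  have invariant: "j \<le> k \<longrightarrow> (\<forall>i<j. ?p i \<notin> T) \<longrightarrow> ?S j + ?f (k - j) (?p j) \<le> ?f k v" for j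
  proof (induction j)
    case (Suc j)
    show ?case
    proof (intro impI)
      assume jk: "Suc j \<le> k" and not_T: "\<forall>i<Suc j. ?p i \<notin> T"
      then have IH: "?S j + ?f (k - j) (?p j) \<le> ?f k v" using Suc by auto
      have step: "ereal (of_int (w (?p j) (?p (Suc j)))) + ?f (k - Suc j) (?p (Suc j)) \<le> ?f (k - j) (?p j)"
        using horizon_strat_Min_step[OF \<tau>] jk not_T by simp
      have "?S (Suc j) + ?f (k - Suc j) (?p (Suc j))
          = ?S j + (ereal (of_int (w (?p j) (?p (Suc j)))) + ?f (k - Suc j) (?p (Suc j)))"
        by (simp only: S_Suc add.assoc)
      also have "\<dots> \<le> ?S j + ?f (k - j) (?p j)" using step by (rule add_left_mono)
      finally show "?S (Suc j) + ?f (k - Suc j) (?p (Suc j)) \<le> ?f k v" using IH by simp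
    qed
  qed simp
  show ?thesis
  proof (cases "\<exists>N\<le>k. ?p N \<in> T")
    case True
    define N where "N = (LEAST N. ?p N \<in> T)"
    obtain N0 where N0: "N0 \<le> k" "?p N0 \<in> T" using True by blast
    have N: "?p N \<in> T" "N \<le> k" "\<forall>j<N. ?p j \<notin> T"
      unfolding N_def using N0 by (auto intro: LeastI Least_le[THEN order_trans] dest: not_less_Least)
    then have "?S N \<le> ?f k v" using invariant[of N] f_iter_T by simp
    then show ?thesis using TP_det_first_hit[OF N(1,3)] by simp
  next
    case False
    then have "?S k + ?f 0 (?p k) \<le> ?f k v" using invariant[of k] by auto
    then have "?f k v = \<infinity>" using False by (simp add: f_iter_0)
    then show ?thesis by simp
  qed
qed

lemma Val_d_le_Val_sigma: "det_strat VMin E \<sigma> \<Longrightarrow> Val_d VMax VMin T E w v \<le> Val_sigma VMax VMin T E w \<sigma> v"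
  unfolding Val_d_def by (intro INF_lower) simp

lemma TP_det_le_Val_sigma: "det_strat VMax E \<tau> \<Longrightarrow> TP_det VMin T w \<sigma> \<tau> v \<le> Val_sigma VMax VMin T E w \<sigma> v"
  unfolding Val_sigma_def by (intro SUP_upper) simp

lemma Val_d_le_f_iter: "Val_d VMax VMin T E w v \<le> f_iter VMin T E w k v"
proof -
  have "Val_d VMax VMin T E w v \<le> Val_sigma VMax VMin T E w (horizon_strat k) v"
    by (rule Val_d_le_Val_sigma[OF horizon_strat_Min])
  also have "\<dots> \<le> f_iter VMin T E w k v"
    unfolding Val_sigma_def using TP_det_horizon_strat_le by (intro SUP_least) simp
  finally show ?thesis .
qed

lemma TP_det_horizon_strat_ge:
  assumes \<sigma>: "det_strat VMin E \<sigma>"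
    and N: "play_vertex VMin \<sigma> (horizon_strat k) v N \<in> T"
      "\<forall>j<N. play_vertex VMin \<sigma> (horizon_strat k) v j \<notin> T"
    and "N \<le> k" and "j0 \<le> N"
  shows "ereal (of_int (\<Sum>i<j0. w (play_vertex VMin \<sigma> (horizon_strat k) v i)
            (play_vertex VMin \<sigma> (horizon_strat k) v (Suc i))))
          + f_iter VMin T E w (k - j0) (play_vertex VMin \<sigma> (horizon_strat k) v j0)
       \<le> TP_det VMin T w \<sigma> (horizon_strat k) v"
proof -
  let ?p = "play_vertex VMin \<sigma> (horizon_strat k) v"
  let ?S = "\<lambda>j. ereal (of_int (\<Sum>i<j. w (?p i) (?p (Suc i))))"
  let ?f = "f_iter VMin T E w"
  have S_Suc: "?S (Suc i) = ?S i + ereal (of_int (w (?p i) (?p (Suc i))))" for i by simp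
  have invariant: "j0 + d \<le> N \<longrightarrow> ?S j0 + ?f (k - j0) (?p j0) \<le> ?S (j0 + d) + ?f (k - (j0 + d)) (?p (j0 + d))"
    for d
  proof (induction d)
    case (Suc d)
    show ?case
    proof
      assume le: "j0 + Suc d \<le> N"
      let ?j = "j0 + d"
      have step: "?f (k - ?j) (?p ?j) \<le> ereal (of_int (w (?p ?j) (?p (Suc ?j)))) + ?f (k - Suc ?j) (?p (Suc ?j))"
        using horizon_strat_Max_step[OF \<sigma>, of ?j k] N(2) le \<open>N \<le> k\<close> by simp
      have "?S ?j + ?f (k - ?j) (?p ?j)
          \<le> ?S ?j + (ereal (of_int (w (?p ?j) (?p (Suc ?j)))) + ?f (k - Suc ?j) (?p (Suc ?j)))"
        using step by (rule add_left_mono)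
      also have "\<dots> = ?S (Suc ?j) + ?f (k - Suc ?j) (?p (Suc ?j))"
        by (simp only: S_Suc add.assoc)
      finally show "?S j0 + ?f (k - j0) (?p j0) \<le> ?S (j0 + Suc d) + ?f (k - (j0 + Suc d)) (?p (j0 + Suc d))"
        using Suc le by simp
    qed
  qed simp
  have "?S j0 + ?f (k - j0) (?p j0) \<le> ?S N + ?f (k - N) (?p N)"
    using invariant[of "N - j0"] \<open>j0 \<le> N\<close> by simp
  also have "\<dots> = TP_det VMin T w \<sigma> (horizon_strat k) v"
    using f_iter_T[OF N(1)] TP_det_first_hit[OF N] by simp
  finally show ?thesis .
qed

section \<open>Optimal memoryless deterministic strategies\<close>

definition opt_mless_det :: "('v list \<Rightarrow> 'v) \<Rightarrow> bool" where
  "opt_mless_det \<sigma> \<longleftrightarrow> det_strat VMin E \<sigma> \<and> memoryless_det \<sigma> \<and>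
     (\<forall>v. Val_sigma VMax VMin T E w \<sigma> v = Val_d VMax VMin T E w v)"

definition iterates_stable :: bool where
  "iterates_stable \<longleftrightarrow> (\<forall>v. f_iter VMin T E w (CARD('v) - 1) v = Val_d VMax VMin T E w v
     \<and> f_iter VMin T E w (CARD('v)) v = Val_d VMax VMin T E w v)"

definition Gtilde_reaching :: "('v list \<Rightarrow> 'v) \<Rightarrow> bool" where
  "Gtilde_reaching \<sigma> \<longleftrightarrow> det_strat VMin (Gtilde_edges VMin T E w (CARD('v) - 1)) \<sigma> \<and>
     (\<forall>v \<tau>. det_strat VMax (Gtilde_edges VMin T E w (CARD('v) - 1)) \<tau> \<longrightarrow>
        (\<exists>n. play_vertex VMin \<sigma> \<tau> v n \<in> T))"

lemma Val_sigma_finite_reaches_T: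
  assumes "det_strat VMax E \<tau>" and "Val_sigma VMax VMin T E w \<sigma> v \<noteq> \<infinity>"
  shows "\<exists>n. play_vertex VMin \<sigma> \<tau> v n \<in> T"
  using TP_det_le_Val_sigma[OF assms(1), of \<sigma> v] TP_det_never_hit assms(2)
  by (metis ereal_infty_less_eq(1))

context
  fixes \<sigma> :: "'v list \<Rightarrow> 'v" and s :: "'v \<Rightarrow> 'v"
  assumes fin_val: "\<forall>v. Val_d VMax VMin T E w v \<noteq> -\<infinity> \<and> Val_d VMax VMin T E w v \<noteq> \<infinity>"
    and opt: "opt_mless_det \<sigma>"
    and \<sigma>_s: "\<And>h. h \<noteq> [] \<Longrightarrow> \<sigma> h = s (last h)"
begin

lemma opt_mless_det_strat: "det_strat VMin E \<sigma>"
  using opt unfolding opt_mless_det_def by blast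

lemma opt_mless_det_ranking: "\<exists>rk. attractor_ranking s rk \<and> (\<forall>x. rk x < CARD('v))"
proof -
  have "\<forall>h. h \<noteq> [] \<longrightarrow> last h \<in> VMin \<longrightarrow> \<sigma> h \<in> {s (last h)}" using \<sigma>_s by simp
  moreover have "\<exists>n. play_vertex VMin \<sigma> \<tau> v n \<in> T" if "det_strat VMax E \<tau>" for \<tau> v
    using Val_sigma_finite_reaches_T[OF that] opt fin_val unfolding opt_mless_det_def by metis
  ultimately obtain s' rk where "attractor_ranking s' rk" "\<forall>u\<in>VMin. s' u = s u" "\<forall>x. rk x < CARD('v)"
    using reaching_strategy_ranking[of \<sigma> "\<lambda>u. {s u}"] by blast
  then show ?thesis unfolding attractor_ranking_def by metis
qed

lemma opt_mless_det_first_hit_lt_card: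
  obtains N where "N < CARD('v)"
    "play_vertex VMin \<sigma> (horizon_strat k) v N \<in> T" "\<forall>j<N. play_vertex VMin \<sigma> (horizon_strat k) v j \<notin> T"
proof -
  obtain rk where rk: "attractor_ranking s rk" "\<forall>x. rk x < CARD('v)"
    using opt_mless_det_ranking by blast
  show ?thesis
    using ranked_play_first_hit[where \<sigma> = \<sigma> and s = s, OF rk(1) \<sigma>_s horizon_strat_Max] that rk(2)
    by (meson order_le_less_trans)
qed

lemma opt_mless_det_iterates_stable: iterates_stable
proof -
  let ?n = "CARD('v) - 1"
  have "f_iter VMin T E w ?n v \<le> Val_d VMax VMin T E w v" for v
  proof -
    obtain N where N: "N < CARD('v)" "play_vertex VMin \<sigma> (horizon_strat ?n) v N \<in> T"
      "\<forall>j<N. play_vertex VMin \<sigma> (horizon_strat ?n) v j \<notin> T"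
      by (rule opt_mless_det_first_hit_lt_card)
    have "f_iter VMin T E w ?n v \<le> TP_det VMin T w \<sigma> (horizon_strat ?n) v"
      using TP_det_horizon_strat_ge[OF opt_mless_det_strat N(2,3), of 0] N(1) by simp
    also have "\<dots> \<le> Val_sigma VMax VMin T E w \<sigma> v" by (rule TP_det_le_Val_sigma[OF horizon_strat_Max])
    finally show ?thesis using opt unfolding opt_mless_det_def by simp
  qed
  moreover have "f_iter VMin T E w CARD('v) v \<le> f_iter VMin T E w ?n v" for v
    by (rule f_iter_antimono) simp
  ultimately show ?thesis unfolding iterates_stable_def
    using Val_d_le_f_iter by (meson antisym order_trans)
qed

lemma opt_mless_det_Gtilde_choices: "det_strat VMin (Gtilde_edges VMin T E w (CARD('v) - 1)) \<sigma>"
  unfolding det_strat_def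
proof (intro allI impI)
  fix h :: "'v list" assume h: "h \<noteq> [] \<and> last h \<in> VMin"
  let ?n = "CARD('v) - 1" and ?f = "f_iter VMin T E w" and ?V = "Val_d VMax VMin T E w"
  define u where "u = last h"
  have u: "u \<in> VMin" "u \<notin> T" using h VMin_not_T unfolding u_def by auto
  have e: "(u, s u) \<in> E"
    using spec[OF opt_mless_det_strat[unfolded det_strat_def], of "[u]"] \<sigma>_s[of "[u]"] u by simp
  have stable: "?f ?n x = ?V x" for x using opt_mless_det_iterates_stable unfolding iterates_stable_def by blast
  \<comment> \<open>the horizon is positive: \<open>f_iter 0\<close> is infinite outside \<open>T\<close>, while \<open>Val_d\<close> is finite\<close>
  obtain m where m: "?n = Suc m"
    using u(2) stable[of u] fin_val f_iter_0[of u] by (metis not0_implies_Suc)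
  obtain N where N: "N < CARD('v)" "play_vertex VMin \<sigma> (horizon_strat ?n) u N \<in> T"
    "\<forall>j<N. play_vertex VMin \<sigma> (horizon_strat ?n) u j \<notin> T"
    by (rule opt_mless_det_first_hit_lt_card)
  have "1 \<le> N" using N(2) u(2) by (cases N) auto
  moreover have "play_vertex VMin \<sigma> (horizon_strat ?n) u 1 = s u"
    using u(1) \<sigma>_s[of "[u]"] by (simp add: play_vertex_Suc)
  moreover have "N \<le> ?n" using N(1) by simp
  ultimately have "ereal (of_int (w u (s u))) + ?f (?n - 1) (s u) \<le> TP_det VMin T w \<sigma> (horizon_strat ?n) u"
    using TP_det_horizon_strat_ge[OF opt_mless_det_strat N(2,3), of 1] by simp
  also have "\<dots> \<le> Val_sigma VMax VMin T E w \<sigma> u" by (rule TP_det_le_Val_sigma[OF horizon_strat_Max])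
  also have "\<dots> = ?f ?n u" using opt stable unfolding opt_mless_det_def by simp
  finally have "ereal (of_int (w u (s u))) + ?f (?n - 1) (s u) = ?f ?n u"
    using F_op_Min_le[OF u(1) e] m f_iter_Suc by (metis antisym diff_Suc_1)
  then show "(last h, \<sigma> h) \<in> Gtilde_edges VMin T E w ?n"
    unfolding Gtilde_edges_def Etilde_def using e h \<sigma>_s u_def by simp
qed

end

lemma Gtilde_edges_subset: "Gtilde_edges VMin T E w i \<subseteq> E"
  unfolding Gtilde_edges_def by auto

lemma det_strat_Max_Gtilde_iff: "det_strat VMax (Gtilde_edges VMin T E w i) \<tau> \<longleftrightarrow> det_strat VMax E \<tau>"
  unfolding det_strat_def Gtilde_edges_def using VMax_iff by auto

lemma opt_mless_det_imp_stable_reaching: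
  assumes fin_val: "\<forall>v. Val_d VMax VMin T E w v \<noteq> -\<infinity> \<and> Val_d VMax VMin T E w v \<noteq> \<infinity>"
    and "opt_mless_det \<sigma>"
  shows "iterates_stable \<and> Gtilde_reaching \<sigma>"
proof -
  obtain s where \<sigma>_s: "\<And>h. h \<noteq> [] \<Longrightarrow> \<sigma> h = s (last h)"
    using assms(2) unfolding opt_mless_det_def memoryless_det_def by blast
  have "\<exists>n. play_vertex VMin \<sigma> \<tau> v n \<in> T" if "det_strat VMax E \<tau>" for \<tau> v
    using Val_sigma_finite_reaches_T[OF that] assms unfolding opt_mless_det_def by metis
  then show ?thesis
    using opt_mless_det_iterates_stable[OF assms \<sigma>_s] opt_mless_det_Gtilde_choices[OF assms \<sigma>_s]
    unfolding Gtilde_reaching_def det_strat_Max_Gtilde_iff by blast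
qed

section \<open>Optimality witnesses\<close>

definition bellman_potential :: "('v \<Rightarrow> real) \<Rightarrow> bool" where
  "bellman_potential \<phi> \<longleftrightarrow> (\<forall>x \<in> T. \<phi> x = 0)
     \<and> (\<forall>u \<in> VMin. \<forall>y. (u, y) \<in> E \<longrightarrow> \<phi> u \<le> real_of_int (w u y) + \<phi> y)
     \<and> (\<forall>x \<in> VMax. \<forall>y. (x, y) \<in> E \<longrightarrow> real_of_int (w x y) + \<phi> y \<le> \<phi> x)
     \<and> (\<forall>x \<in> VMax. \<exists>y. (x, y) \<in> E \<and> \<phi> x = real_of_int (w x y) + \<phi> y)"

definition optimality_witness :: "('v \<Rightarrow> real) \<Rightarrow> ('v \<Rightarrow> 'v) \<Rightarrow> bool" where
  "optimality_witness \<phi> s \<longleftrightarrow> bellman_potential \<phi>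
     \<and> (\<forall>u \<in> VMin. (u, s u) \<in> E \<and> real_of_int (w u (s u)) + \<phi> (s u) \<le> \<phi> u)
     \<and> (\<exists>rk. attractor_ranking s rk)"

lemma bellman_potential_Max_choice:
  assumes "bellman_potential \<phi>"
  obtains t where "\<forall>x \<in> VMax. (x, t x) \<in> E \<and> \<phi> x = real_of_int (w x (t x)) + \<phi> (t x)"
  using assms unfolding bellman_potential_def by metis

lemma bellman_potential_le_Val_d:
  assumes \<phi>: "bellman_potential \<phi>"
  shows "ereal (\<phi> v) \<le> Val_d VMax VMin T E w v"
  unfolding Val_d_def
proof (intro INF_greatest, simp)
  fix \<sigma> assume \<sigma>: "det_strat VMin E \<sigma>"
  obtain t where t: "\<forall>x \<in> VMax. (x, t x) \<in> E \<and> \<phi> x = real_of_int (w x (t x)) + \<phi> (t x)"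
    using bellman_potential_Max_choice[OF \<phi>] .
  define \<tau> where "\<tau> h = t (last h)" for h :: "'v list"
  have \<tau>: "det_strat VMax E \<tau>" unfolding det_strat_def \<tau>_def using t by blast
  let ?p = "play_vertex VMin \<sigma> \<tau> v"
  have "ereal (\<phi> v) \<le> TP_det VMin T w \<sigma> \<tau> v"
  proof (cases "\<exists>n. ?p n \<in> T")
    case False
    then show ?thesis using TP_det_never_hit[of VMin \<sigma> \<tau> v T w] by simp
  next
    case True
    define N where "N = (LEAST n. ?p n \<in> T)"
    have N: "?p N \<in> T" "\<forall>j<N. ?p j \<notin> T"
      unfolding N_def using True by (auto intro: LeastI_ex dest: not_less_Least)
    have "\<phi> (?p j) \<le> real_of_int (w (?p j) (?p (Suc j))) + \<phi> (?p (Suc j))" if "j < N" for j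
    proof (cases "?p j \<in> VMin")
      case True
      then show ?thesis
        using \<phi> play_edge[OF \<sigma> \<tau>] N(2) that unfolding bellman_potential_def by blast
    next
      case False
      then have "?p j \<in> VMax" using N(2) that VMax_iff by blast
      moreover have "?p (Suc j) = t (?p j)"
        using False by (simp add: play_vertex_Suc \<tau>_def last_play_hist)
      ultimately show ?thesis using t by simp
    qed
    then have "\<phi> v \<le> real_of_int (\<Sum>j<N. w (?p j) (?p (Suc j)))"
      using telescope_ge[where p = ?p and \<phi> = \<phi> and N = N] \<phi> N(1)
      unfolding bellman_potential_def by simp
    then show ?thesis using TP_det_first_hit[OF N] by simp
  qed
  also have "\<dots> \<le> Val_sigma VMax VMin T E w \<sigma> v" by (rule TP_det_le_Val_sigma[OF \<tau>])
  finally show "ereal (\<phi> v) \<le> Val_sigma VMax VMin T E w \<sigma> v" .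
qed

lemma Val_sigma_le_potential:
  assumes "optimality_witness \<phi> s"
  shows "Val_sigma VMax VMin T E w (\<lambda>h. s (last h)) v \<le> ereal (\<phi> v)"
  unfolding Val_sigma_def
proof (intro SUP_least, simp)
  fix \<tau> assume \<tau>: "det_strat VMax E \<tau>"
  obtain rk where rk: "attractor_ranking s rk"
    using assms unfolding optimality_witness_def by blast
  let ?p = "play_vertex VMin (\<lambda>h. s (last h)) \<tau> v"
  have "\<exists>N \<le> rk v. ?p N \<in> T \<and> (\<forall>j<N. ?p j \<notin> T)"
    by (rule ranked_play_first_hit[OF rk _ \<tau>]) simp
  then obtain N where N: "?p N \<in> T" "\<forall>j<N. ?p j \<notin> T" by blast
  have "real_of_int (w (?p j) (?p (Suc j))) + \<phi> (?p (Suc j)) \<le> \<phi> (?p j)" if "j < N" for j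
  proof (cases "?p j \<in> VMin")
    case True
    then show ?thesis
      using assms play_vertex_Suc_memoryless[of "\<lambda>h. s (last h)" s] unfolding optimality_witness_def
      by auto
  next
    case False
    then have "?p j \<in> VMax" using N(2) that VMax_iff by blast
    then show ?thesis
      using assms play_edge_Max[OF \<tau>] unfolding optimality_witness_def bellman_potential_def by blast
  qed
  then have "real_of_int (\<Sum>j<N. w (?p j) (?p (Suc j))) \<le> \<phi> v"
    using telescope_le[where p = ?p and \<phi> = \<phi> and N = N] assms N(1)
    unfolding optimality_witness_def bellman_potential_def by simp
  then show "TP_det VMin T w (\<lambda>h. s (last h)) \<tau> v \<le> ereal (\<phi> v)"
    using TP_det_first_hit[OF N] by simp
qed

lemma optimality_witness_opt_mless_det:
  assumes "optimality_witness \<phi> s"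
  shows "opt_mless_det (\<lambda>h. s (last h))"
proof -
  have \<sigma>: "det_strat VMin E (\<lambda>h. s (last h))"
    using assms unfolding optimality_witness_def det_strat_def by blast
  have bellman: "bellman_potential \<phi>" using assms unfolding optimality_witness_def by blast
  have "Val_sigma VMax VMin T E w (\<lambda>h. s (last h)) v = Val_d VMax VMin T E w v" for v
    using Val_sigma_le_potential[OF assms] Val_d_le_Val_sigma[OF \<sigma>]
      bellman_potential_le_Val_d[OF bellman] by (meson antisym order_trans)
  then show ?thesis unfolding opt_mless_det_def memoryless_det_def using \<sigma> by blast
qed

context
  assumes fin_val: "\<forall>v. Val_d VMax VMin T E w v \<noteq> -\<infinity> \<and> Val_d VMax VMin T E w v \<noteq> \<infinity>"
    and stable: iterates_stable
begin

lemma ereal_real_of_Val_d: "ereal (real_of_ereal (Val_d VMax VMin T E w v)) = Val_d VMax VMin T E w v"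
  using fin_val by (cases "Val_d VMax VMin T E w v") auto

lemma stable_f_iter_eq:
  "f_iter VMin T E w (CARD('v) - 1) v = ereal (real_of_ereal (Val_d VMax VMin T E w v))"
  "f_iter VMin T E w (Suc (CARD('v) - 1)) v = ereal (real_of_ereal (Val_d VMax VMin T E w v))"
  using stable ereal_real_of_Val_d unfolding iterates_stable_def by simp_all

lemma stable_iterates_bellman: "bellman_potential (\<lambda>v. real_of_ereal (Val_d VMax VMin T E w v))"
proof -
  let ?\<phi> = "\<lambda>v. real_of_ereal (Val_d VMax VMin T E w v)"
  let ?a = "f_iter VMin T E w (CARD('v) - 1)"
  have a: "?a x = ereal (?\<phi> x)" for x by (rule stable_f_iter_eq(1))
  have F: "F_op VMin T E w ?a x = ereal (?\<phi> x)" for x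
    using stable_f_iter_eq(2) by (simp only: f_iter_Suc)
  have "?\<phi> x = 0" if "x \<in> T" for x
    using a[of x] f_iter_T[OF that] by simp
  moreover have "?\<phi> u \<le> real_of_int (w u y) + ?\<phi> y" if "u \<in> VMin" "(u, y) \<in> E" for u y
    using F_op_Min_le[OF that, of ?a] unfolding F a by simp
  moreover have "real_of_int (w x y) + ?\<phi> y \<le> ?\<phi> x" if "x \<in> VMax" "(x, y) \<in> E" for x y
    using F_op_Max_ge[OF that, of ?a] unfolding F a by simp
  moreover have "\<exists>y. (x, y) \<in> E \<and> ?\<phi> x = real_of_int (w x y) + ?\<phi> y" if "x \<in> VMax" for x
    using F_op_attained[of x ?a] that VMax_iff unfolding F a by auto
  ultimately show ?thesis unfolding bellman_potential_def by blast
qed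

lemma stable_Gtilde_edge_tight:
  assumes "u \<in> VMin" and "(u, y) \<in> Gtilde_edges VMin T E w (CARD('v) - 1)"
  shows "real_of_int (w u y) + real_of_ereal (Val_d VMax VMin T E w y)
    \<le> real_of_ereal (Val_d VMax VMin T E w u)"
proof -
  let ?n = "CARD('v) - 1" and ?f = "f_iter VMin T E w"
  have "ereal (of_int (w u y)) + ?f (?n - 1) y = ?f ?n u"
    using assms unfolding Gtilde_edges_def Etilde_def by simp
  moreover have "?f ?n y \<le> ?f (?n - 1) y" by (rule f_iter_antimono) simp
  ultimately have "ereal (of_int (w u y)) + ?f ?n y \<le> ?f ?n u" by (metis add_left_mono)
  then show ?thesis using stable_f_iter_eq(1) by simp
qed

lemma stable_reaching_witness:
  assumes "Gtilde_reaching \<sigma>"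
  shows "\<exists>s. optimality_witness (\<lambda>v. real_of_ereal (Val_d VMax VMin T E w v)) s"
proof -
  let ?G = "Gtilde_edges VMin T E w (CARD('v) - 1)"
  have "\<forall>h. h \<noteq> [] \<longrightarrow> last h \<in> VMin \<longrightarrow> \<sigma> h \<in> ?G `` {last h}"
    using assms unfolding Gtilde_reaching_def det_strat_def by blast
  moreover have "\<exists>n. play_vertex VMin \<sigma> \<tau> v n \<in> T" if "det_strat VMax E \<tau>" for \<tau> v
    using assms that unfolding Gtilde_reaching_def det_strat_Max_Gtilde_iff by blast
  ultimately obtain s rk where "attractor_ranking s rk" "\<forall>u \<in> VMin. (u, s u) \<in> ?G"
    using reaching_strategy_ranking[of \<sigma> "\<lambda>u. ?G `` {u}"] by blast
  then show ?thesis
    using stable_iterates_bellman stable_Gtilde_edge_tight Gtilde_edges_subset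
    unfolding optimality_witness_def by blast
qed

end

end

section \<open>Markov chains on finite paths\<close>

definition chain_prob :: "('v \<Rightarrow> 'v pmf) \<Rightarrow> 'v list \<Rightarrow> real" where
  "chain_prob P \<pi> = (\<Prod>i < length \<pi> - 1. pmf (P (\<pi> ! i)) (\<pi> ! Suc i))"

lemma chain_prob_nonneg: "chain_prob P \<pi> \<ge> 0"
  unfolding chain_prob_def by (intro prod_nonneg) auto

lemma chain_prob_single [simp]: "chain_prob P [x] = 1"
  unfolding chain_prob_def by simp

lemma chain_prob_Cons: "\<pi> \<noteq> [] \<Longrightarrow> chain_prob P (x # \<pi>) = pmf (P x) (hd \<pi>) * chain_prob P \<pi>"
proof -
  assume ne: "\<pi> \<noteq> []"
  then obtain k where k: "length \<pi> = Suc k" by (cases \<pi>) auto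
  have "chain_prob P (x # \<pi>) = (\<Prod>i < Suc k. pmf (P ((x # \<pi>) ! i)) ((x # \<pi>) ! Suc i))"
    unfolding chain_prob_def using k by simp
  also have "\<dots> = pmf (P x) (\<pi> ! 0) * (\<Prod>i < k. pmf (P (\<pi> ! i)) (\<pi> ! Suc i))"
    by (subst prod.lessThan_Suc_shift) simp
  also have "\<dots> = pmf (P x) (hd \<pi>) * chain_prob P \<pi>"
    unfolding chain_prob_def using k ne by (simp add: hd_conv_nth)
  finally show ?thesis .
qed

lemma chain_prob_pos_transition:
  assumes "chain_prob P \<pi> > 0" and "i < length \<pi> - 1"
  shows "pmf (P (\<pi> ! i)) (\<pi> ! Suc i) > 0"
proof -
  have "pmf (P (\<pi> ! i)) (\<pi> ! Suc i) \<noteq> 0"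
  proof
    assume "pmf (P (\<pi> ! i)) (\<pi> ! Suc i) = 0"
    then have "chain_prob P \<pi> = 0" unfolding chain_prob_def using assms(2) by (intro prod_zero) auto
    then show False using assms(1) by simp
  qed
  then show ?thesis using pmf_nonneg[of "P (\<pi> ! i)" "\<pi> ! Suc i"] by simp
qed

lemma chain_prob_pos_mono:
  assumes "\<forall>x y. pmf (Q x) y > 0 \<longrightarrow> pmf (P x) y > 0" and "chain_prob Q \<pi> > 0"
  shows "chain_prob P \<pi> > 0"
  unfolding chain_prob_def using chain_prob_pos_transition[OF assms(2)] assms(1) by (intro prod_pos) auto

lemma path_weight_Cons: "\<pi> \<noteq> [] \<Longrightarrow> path_weight w (x # \<pi>) = w x (hd \<pi>) + path_weight w \<pi>"
proof -
  assume ne: "\<pi> \<noteq> []"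
  then obtain k where k: "length \<pi> = Suc k" by (cases \<pi>) auto
  have "path_weight w (x # \<pi>) = (\<Sum>i < Suc k. w ((x # \<pi>) ! i) ((x # \<pi>) ! Suc i))"
    unfolding path_weight_def using k by simp
  also have "\<dots> = w x (\<pi> ! 0) + (\<Sum>i < k. w (\<pi> ! i) (\<pi> ! Suc i))"
    by (subst sum.lessThan_Suc_shift) simp
  also have "\<dots> = w x (hd \<pi>) + path_weight w \<pi>"
    unfolding path_weight_def using k ne by (simp add: hd_conv_nth)
  finally show ?thesis .
qed

lemma fplays_hd: "\<pi> \<in> fplays T E x \<Longrightarrow> \<pi> \<noteq> [] \<and> hd \<pi> = x"
  unfolding fplays_def by simp

lemma fplays_T: "x \<in> T \<Longrightarrow> fplays T E x = {[x]}"
proof (intro equalityI subsetI)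
  fix \<pi> assume x: "x \<in> T" and p: "\<pi> \<in> fplays T E x"
  then have ne: "\<pi> \<noteq> []" "hd \<pi> = x" and ok: "\<forall>i<length \<pi> - 1. \<pi> ! i \<notin> T"
    unfolding fplays_def by auto
  show "\<pi> \<in> {[x]}"
  proof (cases "length \<pi> - 1")
    case 0
    then show ?thesis using ne by (cases \<pi>) auto
  next
    case (Suc k)
    then have "\<pi> ! 0 \<notin> T" using ok by auto
    then show ?thesis using ne x by (simp add: hd_conv_nth)
  qed
next
  fix \<pi> assume "x \<in> T" "\<pi> \<in> {[x]}"
  then show "\<pi> \<in> fplays T E x" unfolding fplays_def by simp
qed

lemma Cons_in_fplays:
  assumes x: "x \<notin> T" and e: "(x, y) \<in> E" and \<pi>: "\<pi> \<in> fplays T E y"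
  shows "x # \<pi> \<in> fplays T E x"
proof -
  from \<pi> have ne: "\<pi> \<noteq> []" and hd: "hd \<pi> = y" and last: "last \<pi> \<in> T"
    and steps: "\<forall>i<length \<pi> - 1. \<pi> ! i \<notin> T \<and> (\<pi> ! i, \<pi> ! Suc i) \<in> E"
    unfolding fplays_def by auto
  have "(x # \<pi>) ! i \<notin> T \<and> ((x # \<pi>) ! i, (x # \<pi>) ! Suc i) \<in> E" if i: "i < length (x # \<pi>) - 1" for i
  proof (cases i)
    case 0
    then show ?thesis using x e hd ne by (simp add: hd_conv_nth)
  next
    case (Suc j)
    then show ?thesis using steps i by simp
  qed
  then show ?thesis unfolding fplays_def using ne last by simp
qed

lemma fplays_not_T_Cons:
  assumes x: "x \<notin> T" and \<pi>: "\<pi> \<in> fplays T E x"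
  obtains y \<pi>' where "(x, y) \<in> E" "\<pi>' \<in> fplays T E y" "\<pi> = x # \<pi>'"
proof -
  from \<pi> have ne: "\<pi> \<noteq> []" and hd: "hd \<pi> = x" and last: "last \<pi> \<in> T"
    and steps: "\<forall>i<length \<pi> - 1. \<pi> ! i \<notin> T \<and> (\<pi> ! i, \<pi> ! Suc i) \<in> E"
    unfolding fplays_def by auto
  obtain \<pi>' where \<pi>_eq: "\<pi> = x # \<pi>'" using ne hd by (cases \<pi>) auto
  have ne': "\<pi>' \<noteq> []" using last x \<pi>_eq by auto
  have "(x, hd \<pi>') \<in> E" using steps[rule_format, of 0] \<pi>_eq ne' by (simp add: hd_conv_nth)
  moreover have "\<pi>' ! i \<notin> T \<and> (\<pi>' ! i, \<pi>' ! Suc i) \<in> E" if "i < length \<pi>' - 1" for i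
    using steps[rule_format, of "Suc i"] that \<pi>_eq by simp
  then have "\<pi>' \<in> fplays T E (hd \<pi>')" unfolding fplays_def using ne' last \<pi>_eq by simp
  ultimately show ?thesis using that \<pi>_eq by blast
qed

lemma fplays_Cons: "x \<notin> T \<Longrightarrow> fplays T E x = (\<Union>y\<in>E `` {x}. (#) x ` fplays T E y)"
  by (auto elim: fplays_not_T_Cons intro: Cons_in_fplays)

lemma nn_integral_fplays_Cons:
  assumes x: "x \<notin> T" and fin: "finite (E `` {x})"
  shows "(\<integral>\<^sup>+\<pi>. G \<pi> \<partial>count_space (fplays T E x)) = (\<Sum>y\<in>E `` {x}. \<integral>\<^sup>+\<pi>. G (x # \<pi>) \<partial>count_space (fplays T E y))"
proof -
  let ?A = "\<lambda>y. (#) x ` fplays T E y"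
  have disj: "disjoint_family_on ?A (E `` {x})"
    unfolding disjoint_family_on_def
  proof (intro ballI impI)
    fix m n assume mn: "m \<in> E `` {x}" "n \<in> E `` {x}" "m \<noteq> n"
    show "?A m \<inter> ?A n = {}"
    proof (rule ccontr)
      assume "?A m \<inter> ?A n \<noteq> {}"
      then obtain p1 p2 where p: "p1 \<in> fplays T E m" "p2 \<in> fplays T E n" "x # p1 = x # p2" by blast
      then show False using fplays_hd[OF p(1)] fplays_hd[OF p(2)] mn(3) by simp
    qed
  qed
  have "(\<integral>\<^sup>+\<pi>. G \<pi> \<partial>count_space (fplays T E x)) = (\<integral>\<^sup>+\<pi>. G \<pi> * indicator (fplays T E x) \<pi> \<partial>count_space UNIV)"
    by (rule nn_integral_count_space_indicator) simp
  also have "\<dots> = (\<integral>\<^sup>+\<pi>. (\<Sum>y\<in>E `` {x}. G \<pi> * indicator (?A y) \<pi>) \<partial>count_space UNIV)"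
    unfolding fplays_Cons[OF x] by (subst indicator_UN_disjoint[OF _ disj]) (simp_all add: sum_distrib_left fin)
  also have "\<dots> = (\<Sum>y\<in>E `` {x}. \<integral>\<^sup>+\<pi>. G \<pi> * indicator (?A y) \<pi> \<partial>count_space UNIV)"
    by (rule nn_integral_sum) (simp_all add: fin)
  also have "\<dots> = (\<Sum>y\<in>E `` {x}. \<integral>\<^sup>+\<pi>. G \<pi> \<partial>count_space (?A y))"
    by (intro sum.cong refl, subst nn_integral_count_space_indicator) simp_all
  also have "\<dots> = (\<Sum>y\<in>E `` {x}. \<integral>\<^sup>+\<pi>. G (x # \<pi>) \<partial>count_space (fplays T E y))"
    by (intro sum.cong refl nn_integral_bij_count_space[symmetric]) (simp add: bij_betw_def inj_on_def)
  finally show ?thesis .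
qed

lemma sum_pmf_return:
  assumes "finite S" and "y \<in> S"
  shows "(\<Sum>z\<in>S. pmf (return_pmf y) z * F z) = F y"
proof -
  have "(\<Sum>z\<in>S. pmf (return_pmf y) z * F z) = (\<Sum>z\<in>S. if z = y then F z else 0)"
    by (intro sum.cong refl) (auto simp: indicator_def)
  also have "\<dots> = F y" using assms by (simp add: sum.delta)
  finally show ?thesis .
qed

definition half_mix :: "'a pmf \<Rightarrow> 'a \<Rightarrow> 'a pmf" where
  "half_mix p y = bind_pmf (bernoulli_pmf (1/2)) (\<lambda>b. if b then p else return_pmf y)"

lemma pmf_half_mix: "pmf (half_mix p y) z = pmf p z / 2 + pmf (return_pmf y) z / 2"
  unfolding half_mix_def pmf_bind by simp

lemma set_pmf_half_mix: "set_pmf (half_mix p y) = insert y (set_pmf p)"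
  unfolding half_mix_def by (auto simp: set_bind_pmf split: if_splits)

lemma sum_pmf_half_mix:
  assumes "finite S" and "y \<in> S"
  shows "(\<Sum>z\<in>S. pmf (half_mix p y) z * F z) = (\<Sum>z\<in>S. pmf p z * F z) / 2 + F y / 2"
proof -
  have "(\<Sum>z\<in>S. pmf (half_mix p y) z * F z)
      = (\<Sum>z\<in>S. pmf p z * F z) / 2 + (\<Sum>z\<in>S. pmf (return_pmf y) z * F z) / 2"
    by (simp del: pmf_return add: pmf_half_mix algebra_simps sum.distrib sum_divide_distrib)
  then show ?thesis using sum_pmf_return[OF assms, of F] by simp
qed

lemma pmf_positive_lower_bound:
  fixes P :: "'a::finite \<Rightarrow> 'b::finite pmf"
  obtains \<delta> where "0 < \<delta>" "\<delta> \<le> 1" "\<And>a b. 0 < pmf (P a) b \<Longrightarrow> \<delta> \<le> pmf (P a) b"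
proof -
  define D where "D = {pmf (P a) b | a b. pmf (P a) b > 0}"
  have "D \<subseteq> (\<lambda>(a, b). pmf (P a) b) ` UNIV" unfolding D_def by auto
  then have D_finite: "finite D" by (rule finite_subset) simp
  obtain b0 where "b0 \<in> set_pmf (P undefined)" using set_pmf_not_empty[of "P undefined"] by blast
  then have b0: "pmf (P undefined) b0 > 0" by (simp add: pmf_positive)
  then have "D \<noteq> {}" unfolding D_def by auto
  then have pos: "0 < Min D" using D_finite by (subst Min_gr_iff) (auto simp: D_def)
  have min_le: "Min D \<le> pmf (P a) b" if "0 < pmf (P a) b" for a b
    using D_finite that by (intro Min_le) (auto simp: D_def)
  have "Min D \<le> 1" using min_le[OF b0] pmf_le_1[of "P undefined" b0] by linarith
  then show ?thesis using that[OF pos] min_le by blast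
qed

abbreviation dirac_strat :: "('v \<Rightarrow> 'v) \<Rightarrow> 'v \<Rightarrow> 'v pmf" where
  "dirac_strat t x \<equiv> return_pmf (t x)"

lemma nn_integral_prob_mult_le:
  fixes p f :: "'a \<Rightarrow> real"
  assumes total: "(\<integral>\<^sup>+x. ennreal (p x) \<partial>count_space A) = 1" and nonneg: "\<And>x. 0 \<le> p x"
    and le: "\<And>x. x \<in> A \<Longrightarrow> 0 < p x \<Longrightarrow> f x \<le> d" and "0 \<le> d"
  shows "(\<integral>\<^sup>+x. ennreal (p x * f x) \<partial>count_space A) \<le> ennreal d"
proof -
  have "(\<integral>\<^sup>+x. ennreal (p x * f x) \<partial>count_space A) \<le> (\<integral>\<^sup>+x. ennreal d * ennreal (p x) \<partial>count_space A)"
  proof (rule nn_integral_mono)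
    fix x assume "x \<in> space (count_space A)"
    then have "p x * f x \<le> d * p x" if "0 < p x" using le[of x] that by (simp add: mult.commute)
    moreover have "p x = 0" if "\<not> 0 < p x" using nonneg[of x] that by simp
    ultimately show "ennreal (p x * f x) \<le> ennreal d * ennreal (p x)"
      using \<open>0 \<le> d\<close> nonneg[of x] by (cases "0 < p x") (auto simp: ennreal_mult[symmetric] intro: ennreal_leI)
  qed
  also have "\<dots> = ennreal d" using total by (simp add: nn_integral_cmult)
  finally show ?thesis .
qed

lemma nn_integral_prob_mult_ge:
  fixes p f :: "'a \<Rightarrow> real"
  assumes total: "(\<integral>\<^sup>+x. ennreal (p x) \<partial>count_space A) = 1" and nonneg: "\<And>x. 0 \<le> p x"
    and ge: "\<And>x. x \<in> A \<Longrightarrow> 0 < p x \<Longrightarrow> d \<le> f x" and "0 \<le> d"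
  shows "ennreal d \<le> (\<integral>\<^sup>+x. ennreal (p x * f x) \<partial>count_space A)"
proof -
  have "ennreal d = (\<integral>\<^sup>+x. ennreal d * ennreal (p x) \<partial>count_space A)"
    using total by (simp add: nn_integral_cmult)
  also have "\<dots> \<le> (\<integral>\<^sup>+x. ennreal (p x * f x) \<partial>count_space A)"
  proof (rule nn_integral_mono)
    fix x assume "x \<in> space (count_space A)"
    then have "d * p x \<le> p x * f x" if "0 < p x" using ge[of x] that by (simp add: mult.commute)
    moreover have "p x = 0" if "\<not> 0 < p x" using nonneg[of x] that by simp
    ultimately show "ennreal d * ennreal (p x) \<le> ennreal (p x * f x)"
      using \<open>0 \<le> d\<close> nonneg[of x] by (cases "0 < p x") (auto simp: ennreal_mult[symmetric] intro: ennreal_leI)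
  qed
  finally show ?thesis .
qed

text \<open>Starting from \<open>b 0 = (R + 1) / \<delta>^R\<close> gives \<open>b k \<ge> \<delta>^k * b 0 - k \<ge> 1\<close> for \<open>k \<le> R\<close>.\<close>

lemma contracting_recurrence_bounded:
  fixes \<delta> :: real and R :: nat
  assumes \<delta>: "0 < \<delta>" "\<delta> \<le> 1"
  obtains b :: "nat \<Rightarrow> real" where "\<And>k. b (Suc k) = \<delta> * b k - 1"
    and "\<And>k. k \<le> R \<Longrightarrow> 1 \<le> b k" and "\<And>j k. j \<le> k \<Longrightarrow> k \<le> R \<Longrightarrow> b k \<le> b j"
proof -
  define G :: real where "G = (real R + 1) / \<delta> ^ R"
  define b :: "nat \<Rightarrow> real" where "b = rec_nat G (\<lambda>_ bk. \<delta> * bk - 1)"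
  have b0: "b 0 = G" and b_Suc: "b (Suc k) = \<delta> * b k - 1" for k unfolding b_def by simp_all
  have b_lower: "b k \<ge> \<delta> ^ k * G - real k" for k
  proof (induction k)
    case (Suc k)
    have "\<delta> * real k \<le> real k" using \<delta> by (intro mult_left_le_one_le) auto
    then have "\<delta> * (\<delta> ^ k * G - real k) - 1 \<ge> \<delta> ^ Suc k * G - real (Suc k)"
      by (simp add: algebra_simps)
    moreover have "\<delta> * b k \<ge> \<delta> * (\<delta> ^ k * G - real k)" using Suc \<delta> by simp
    ultimately show ?case by (simp add: b_Suc)
  qed (simp add: b0)
  have b_ge_1: "b k \<ge> 1" if "k \<le> R" for k
  proof -
    have "\<delta> ^ R \<le> \<delta> ^ k" using that \<delta> by (intro power_decreasing) auto
    moreover have "G \<ge> 0" unfolding G_def using \<delta> by simp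
    ultimately have "\<delta> ^ k * G \<ge> \<delta> ^ R * G" by (intro mult_right_mono) auto
    moreover have "\<delta> ^ R * G = real R + 1" unfolding G_def using \<delta> by simp
    ultimately show ?thesis using b_lower[of k] that by simp
  qed
  have b_dec: "b k \<le> b j" if "j \<le> k" "k \<le> R" for j k
    using that
  proof (induction k rule: dec_induct)
    case (step k)
    have "\<delta> * b k \<le> b k" using b_ge_1[of k] step \<delta> by (intro mult_left_le_one_le) auto
    then show ?case using step by (simp add: b_Suc)
  qed simp
  show ?thesis using that b_Suc b_ge_1 b_dec by blast
qed

context spg
begin

abbreviation induced_chain :: "('v \<Rightarrow> 'v pmf) \<Rightarrow> ('v \<Rightarrow> 'v pmf) \<Rightarrow> 'v \<Rightarrow> 'v pmf" where
  "induced_chain \<rho> \<tau> x \<equiv> if x \<in> VMin then \<rho> x else \<tau> x"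

lemma path_prob_eq_chain_prob: "path_prob VMin \<rho> \<tau> = chain_prob (induced_chain \<rho> \<tau>)"
  unfolding path_prob_def chain_prob_def by (intro ext) simp

definition path_integral :: "('v \<Rightarrow> 'v pmf) \<Rightarrow> ('v list \<Rightarrow> ennreal) \<Rightarrow> 'v \<Rightarrow> ennreal" where
  "path_integral P g x = (\<integral>\<^sup>+\<pi>. ennreal (chain_prob P \<pi>) * g \<pi> \<partial>count_space (fplays T E x))"

lemma path_integral_T: "x \<in> T \<Longrightarrow> path_integral P g x = g [x]"
  unfolding path_integral_def by (simp add: fplays_T nn_integral_count_space_finite)

lemma path_integral_step:
  assumes x: "x \<notin> T"
  shows "path_integral P g x = (\<Sum>y\<in>E `` {x}. ennreal (pmf (P x) y) *
            (\<integral>\<^sup>+\<pi>. ennreal (chain_prob P \<pi>) * g (x # \<pi>) \<partial>count_space (fplays T E y)))"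
proof -
  have "path_integral P g x = (\<Sum>y\<in>E `` {x}. \<integral>\<^sup>+\<pi>. ennreal (chain_prob P (x # \<pi>)) * g (x # \<pi>) \<partial>count_space (fplays T E y))"
    unfolding path_integral_def by (rule nn_integral_fplays_Cons[OF x finite])
  also have "\<dots> = (\<Sum>y\<in>E `` {x}. \<integral>\<^sup>+\<pi>. ennreal (pmf (P x) y) * (ennreal (chain_prob P \<pi>) * g (x # \<pi>)) \<partial>count_space (fplays T E y))"
  proof (intro sum.cong refl nn_integral_cong)
    fix y \<pi> assume "\<pi> \<in> space (count_space (fplays T E y))"
    then have "\<pi> \<noteq> []" "hd \<pi> = y" using fplays_hd[of \<pi> T E y] by auto
    then show "ennreal (chain_prob P (x # \<pi>)) * g (x # \<pi>) = ennreal (pmf (P x) y) * (ennreal (chain_prob P \<pi>) * g (x # \<pi>))"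
      by (simp add: chain_prob_Cons ennreal_mult chain_prob_nonneg mult.assoc)
  qed
  also have "\<dots> = (\<Sum>y\<in>E `` {x}. ennreal (pmf (P x) y) * (\<integral>\<^sup>+\<pi>. ennreal (chain_prob P \<pi>) * g (x # \<pi>) \<partial>count_space (fplays T E y)))"
    by (intro sum.cong refl nn_integral_cmult) simp
  finally show ?thesis .
qed

definition chain_on_E :: "('v \<Rightarrow> 'v pmf) \<Rightarrow> bool" where
  "chain_on_E P \<longleftrightarrow> (\<forall>x. x \<notin> T \<longrightarrow> set_pmf (P x) \<subseteq> E `` {x})"

lemma sum_pmf_succ: "chain_on_E P \<Longrightarrow> x \<notin> T \<Longrightarrow> (\<Sum>y\<in>E `` {x}. pmf (P x) y) = 1"
  unfolding chain_on_E_def by (intro sum_pmf_eq_1) auto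

lemma sum_pmf_succ_ennreal: "chain_on_E P \<Longrightarrow> x \<notin> T \<Longrightarrow> (\<Sum>y\<in>E `` {x}. ennreal (pmf (P x) y)) = 1"
  using sum_pmf_succ by (simp add: sum_ennreal[symmetric])

lemma path_integral_SUP:
  assumes "incseq g"
  shows "path_integral P (\<lambda>\<pi>. SUP m. g m \<pi>) x = (SUP m. path_integral P (g m) x)"
proof -
  have "path_integral P (\<lambda>\<pi>. SUP m. g m \<pi>) x = (\<integral>\<^sup>+\<pi>. (SUP m. ennreal (chain_prob P \<pi>) * g m \<pi>) \<partial>count_space (fplays T E x))"
    unfolding path_integral_def by (simp add: SUP_mult_left_ennreal)
  also have "\<dots> = (SUP m. \<integral>\<^sup>+\<pi>. ennreal (chain_prob P \<pi>) * g m \<pi> \<partial>count_space (fplays T E x))"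
    using assms by (intro nn_integral_monotone_convergence_SUP) (auto simp: incseq_def le_fun_def intro!: mult_left_mono)
  finally show ?thesis unfolding path_integral_def .
qed

definition reach_chain :: "('v \<Rightarrow> 'v pmf) \<Rightarrow> 'v \<Rightarrow> ennreal" where
  "reach_chain P x = path_integral P (\<lambda>_. 1) x"

lemma reach_prob_eq_reach_chain: "reach_prob VMin T E \<rho> \<tau> v = reach_chain (induced_chain \<rho> \<tau>) v"
  unfolding reach_prob_def reach_chain_def path_integral_def path_prob_eq_chain_prob by simp

lemma reach_chain_le_1:
  assumes P: "chain_on_E P"
  shows "reach_chain P x \<le> 1"
proof -
  define g where "g m \<pi> = (if length \<pi> \<le> m then 1 else 0 :: ennreal)" for m and \<pi> :: "'v list"
  have inc: "incseq g" unfolding incseq_def le_fun_def g_def by auto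
  have sup: "(SUP m. g m \<pi>) = 1" for \<pi>
  proof (rule antisym)
    show "(SUP m. g m \<pi>) \<le> 1" unfolding g_def by (intro SUP_least) auto
    show "1 \<le> (SUP m. g m \<pi>)" using SUP_upper[of "length \<pi>" UNIV "\<lambda>m. g m \<pi>"] unfolding g_def by simp
  qed
  have truncated_bound: "path_integral P (g m) x \<le> 1" for m x
  proof (induction m arbitrary: x)
    case 0
    have "g 0 \<pi> = 0" if "\<pi> \<in> fplays T E x" for \<pi> using fplays_hd[OF that] unfolding g_def by simp
    then have "path_integral P (g 0) x = 0"
      unfolding path_integral_def by (intro nn_integral_zero' AE_I2) simp
    then show ?case by simp
  next
    case (Suc m)
    show ?case
    proof (cases "x \<in> T")
      case True
      then show ?thesis by (simp add: path_integral_T g_def)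
    next
      case False
      have "path_integral P (g (Suc m)) x = (\<Sum>y\<in>E `` {x}. ennreal (pmf (P x) y) * path_integral P (g m) y)"
        unfolding path_integral_step[OF False]
      proof (intro sum.cong refl arg_cong2[where f="(*)"])
        fix y
        show "(\<integral>\<^sup>+\<pi>. ennreal (chain_prob P \<pi>) * g (Suc m) (x # \<pi>) \<partial>count_space (fplays T E y))
            = path_integral P (g m) y"
          unfolding path_integral_def by (intro nn_integral_cong) (auto simp: g_def dest!: fplays_hd)
      qed
      also have "\<dots> \<le> (\<Sum>y\<in>E `` {x}. ennreal (pmf (P x) y) * 1)"
        by (intro sum_mono mult_left_mono Suc.IH) simp
      also have "\<dots> = 1" using sum_pmf_succ_ennreal[OF P False] by simp
      finally show ?thesis .
    qed
  qed
  have "reach_chain P x = path_integral P (\<lambda>\<pi>. SUP m. g m \<pi>) x" unfolding reach_chain_def sup by simp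
  also have "\<dots> = (SUP m. path_integral P (g m) x)" by (rule path_integral_SUP[OF inc])
  also have "\<dots> \<le> 1" by (intro SUP_least truncated_bound)
  finally show ?thesis .
qed

lemma reach_chain_T: "x \<in> T \<Longrightarrow> reach_chain P x = 1"
  unfolding reach_chain_def by (simp add: path_integral_T)

lemma reach_chain_step: "x \<notin> T \<Longrightarrow> reach_chain P x = (\<Sum>y\<in>E `` {x}. ennreal (pmf (P x) y) * reach_chain P y)"
  unfolding reach_chain_def by (subst path_integral_step) (simp_all add: path_integral_def)

definition T_accessible :: "('v \<Rightarrow> 'v pmf) \<Rightarrow> bool" where
  "T_accessible P \<longleftrightarrow> (\<forall>x. \<exists>\<pi>\<in>fplays T E x. chain_prob P \<pi> > 0)"

definition access_rank :: "('v \<Rightarrow> 'v pmf) \<Rightarrow> 'v \<Rightarrow> nat" where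
  "access_rank P x = (LEAST k. \<exists>\<pi>\<in>fplays T E x. chain_prob P \<pi> > 0 \<and> length \<pi> = Suc k)"

lemma T_accessible_mono:
  assumes mono: "\<forall>x y. pmf (Q x) y > 0 \<longrightarrow> pmf (P x) y > 0" and acc: "T_accessible Q"
  shows "T_accessible P"
  unfolding T_accessible_def
proof
  fix x
  obtain \<pi> where "\<pi> \<in> fplays T E x" "chain_prob Q \<pi> > 0" using acc unfolding T_accessible_def by blast
  then show "\<exists>\<pi>\<in>fplays T E x. chain_prob P \<pi> > 0" using chain_prob_pos_mono[OF mono] by blast
qed

lemma access_rank_step:
  assumes acc: "T_accessible P" and x: "x \<notin> T"
  shows "\<exists>y. (x, y) \<in> E \<and> pmf (P x) y > 0 \<and> access_rank P y < access_rank P x"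
proof -
  obtain \<pi>0 where p0: "\<pi>0 \<in> fplays T E x" "chain_prob P \<pi>0 > 0" using acc unfolding T_accessible_def by blast
  then have "length \<pi>0 = Suc (length \<pi>0 - 1)" using fplays_hd[OF p0(1)] by (cases \<pi>0) auto
  then have ex: "\<exists>k. \<exists>\<pi>\<in>fplays T E x. chain_prob P \<pi> > 0 \<and> length \<pi> = Suc k" using p0 by blast
  have "\<exists>\<pi>\<in>fplays T E x. chain_prob P \<pi> > 0 \<and> length \<pi> = Suc (access_rank P x)"
    unfolding access_rank_def by (rule LeastI_ex) (rule ex)
  then obtain \<pi> where p: "\<pi> \<in> fplays T E x" "chain_prob P \<pi> > 0" "length \<pi> = Suc (access_rank P x)"
    by blast
  obtain y \<pi>' where e: "(x, y) \<in> E" and p': "\<pi>' \<in> fplays T E y" and pe: "\<pi> = x # \<pi>'"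
    using fplays_not_T_Cons[OF x p(1)] .
  have ne': "\<pi>' \<noteq> []" "hd \<pi>' = y" using fplays_hd[OF p'] by auto
  have "chain_prob P \<pi> = pmf (P x) y * chain_prob P \<pi>'" using pe ne' chain_prob_Cons[OF ne'(1)] by simp
  then have pos2: "pmf (P x) y > 0" "chain_prob P \<pi>' > 0" using p(2) chain_prob_nonneg[of P \<pi>'] pmf_nonneg[of "P x" y]
    by (auto simp: zero_less_mult_iff)
  obtain k where k: "length \<pi>' = Suc k" using ne' by (cases \<pi>') auto
  then have "access_rank P y \<le> k" unfolding access_rank_def using p' pos2 by (intro Least_le) blast
  moreover have "Suc k = access_rank P x" using k pe p(3) by simp
  ultimately show ?thesis using e pos2 by (intro exI[of _ y]) auto
qed

text \<open>A minimiser of \<open>d\<close> of least access rank has a successor of lower rank that is reached with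
  positive probability; superharmonicity forces that successor to be a minimiser as well.\<close>

lemma minimum_principle:
  fixes d :: "'v \<Rightarrow> real"
  assumes P: "chain_on_E P" and acc: "T_accessible P"
    and sup: "\<And>x. x \<notin> T \<Longrightarrow> d x \<ge> (\<Sum>y\<in>E `` {x}. pmf (P x) y * d y)"
    and bT: "\<And>x. x \<in> T \<Longrightarrow> d x \<ge> 0"
  shows "d x \<ge> 0"
proof (rule ccontr)
  assume neg: "\<not> d x \<ge> 0"
  define m where "m = Min (range d)"
  have mle: "m \<le> d y" for y unfolding m_def by simp
  have min_in: "m \<in> range d" unfolding m_def by (intro Min_in) auto
  have mneg: "m < 0" using mle[of x] neg by simp
  define S where "S = {y. d y = m}"
  have "S \<noteq> {}" using min_in unfolding S_def by auto
  then obtain z where z: "z \<in> S" "\<And>z'. z' \<in> S \<Longrightarrow> access_rank P z \<le> access_rank P z'"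
    using ex_has_least_nat[of "\<lambda>z. z \<in> S" _ "access_rank P"] by blast
  have zT: "z \<notin> T" using z(1) bT mneg unfolding S_def by force
  obtain y0 where y0: "(z, y0) \<in> E" "pmf (P z) y0 > 0" "access_rank P y0 < access_rank P z"
    using access_rank_step[OF acc zT] by blast
  have "(\<Sum>y\<in>E `` {z}. pmf (P z) y * (d y - m)) = (\<Sum>y\<in>E `` {z}. pmf (P z) y * d y) - (\<Sum>y\<in>E `` {z}. pmf (P z) y) * m"
    by (simp add: right_diff_distrib sum_subtractf sum_distrib_right)
  also have "\<dots> = (\<Sum>y\<in>E `` {z}. pmf (P z) y * d y) - m" using sum_pmf_succ[OF P zT] by simp
  also have "\<dots> \<le> d z - m" using sup[OF zT] by simp
  also have "\<dots> = 0" using z(1) unfolding S_def by simp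
  finally have s0: "(\<Sum>y\<in>E `` {z}. pmf (P z) y * (d y - m)) \<le> 0" .
  have "pmf (P z) y0 * (d y0 - m) \<le> (\<Sum>y\<in>E `` {z}. pmf (P z) y * (d y - m))"
    using y0(1) by (intro member_le_sum) (auto simp: mle)
  then have "pmf (P z) y0 * (d y0 - m) \<le> 0" using s0 by simp
  then have "d y0 \<le> m" using y0(2) by (simp add: mult_le_0_iff)
  then have "y0 \<in> S" using mle[of y0] unfolding S_def by simp
  then show False using z(2) y0(3) by fastforce
qed

lemma reach_chain_eq_1:
  assumes P: "chain_on_E P" and acc: "T_accessible P"
  shows "reach_chain P x = 1"
proof -
  define r where "r y = enn2real (reach_chain P y)" for y
  have fin: "reach_chain P y = ennreal (r y)" for y
  proof -
    have "reach_chain P y < top" using reach_chain_le_1[OF P, of y] ennreal_one_less_top by (rule order.strict_trans1)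
    then show ?thesis unfolding r_def by simp
  qed
  have rnn: "r z \<ge> 0" for z unfolding r_def by simp
  have step: "r y = (\<Sum>z\<in>E `` {y}. pmf (P y) z * r z)" if "y \<notin> T" for y
  proof -
    have "ennreal (r y) = (\<Sum>z\<in>E `` {y}. ennreal (pmf (P y) z) * reach_chain P z)"
      using reach_chain_step[OF that, of P] fin[of y] by simp
    also have "\<dots> = (\<Sum>z\<in>E `` {y}. ennreal (pmf (P y) z * r z))"
      by (intro sum.cong refl) (simp add: fin ennreal_mult rnn)
    also have "\<dots> = ennreal (\<Sum>z\<in>E `` {y}. pmf (P y) z * r z)"
      by (rule sum_ennreal) (simp add: r_def)
    finally show ?thesis using rnn by (simp add: sum_nonneg)
  qed
  have "r x - 1 \<ge> 0"
  proof (rule minimum_principle[OF P acc, of "\<lambda>y. r y - 1"])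
    fix y assume y: "y \<notin> T"
    have "(\<Sum>z\<in>E `` {y}. pmf (P y) z * (r z - 1)) = (\<Sum>z\<in>E `` {y}. pmf (P y) z * r z) - (\<Sum>z\<in>E `` {y}. pmf (P y) z)"
      by (simp add: right_diff_distrib sum_subtractf)
    also have "\<dots> = (\<Sum>z\<in>E `` {y}. pmf (P y) z * r z) - 1" using sum_pmf_succ[OF P y] by simp
    finally have "(\<Sum>z\<in>E `` {y}. pmf (P y) z * (r z - 1)) = (\<Sum>z\<in>E `` {y}. pmf (P y) z * r z) - 1" .
    then show "(\<Sum>z\<in>E `` {y}. pmf (P y) z * (r z - 1)) \<le> r y - 1" using step[OF y] by simp
  next
    fix y assume "y \<in> T" then show "0 \<le> r y - 1" by (simp add: r_def reach_chain_T)
  qed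
  moreover have "r x \<le> 1" unfolding r_def using reach_chain_le_1[OF P, of x] by (simp add: enn2real_leI)
  ultimately show ?thesis using fin[of x] by simp
qed

definition path_len :: "'v list \<Rightarrow> real" where "path_len \<pi> = real (length \<pi> - 1)"

lemma path_len_single [simp]: "path_len [x] = 0"
  unfolding path_len_def by simp

lemma path_len_Cons: "\<pi> \<noteq> [] \<Longrightarrow> path_len (x # \<pi>) = 1 + path_len \<pi>"
  unfolding path_len_def by (cases \<pi>) auto

lemma path_len_nonneg: "path_len \<pi> \<ge> 0" unfolding path_len_def by simp

definition exp_len :: "('v \<Rightarrow> 'v pmf) \<Rightarrow> 'v \<Rightarrow> ennreal" where
  "exp_len P x = path_integral P (\<lambda>\<pi>. ennreal (path_len \<pi>)) x"

lemma path_integral_const_plus: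
  "(\<integral>\<^sup>+\<pi>. ennreal (chain_prob P \<pi>) * (c + g \<pi>) \<partial>count_space (fplays T E y)) = c * reach_chain P y + path_integral P g y"
proof -
  have "(\<integral>\<^sup>+\<pi>. ennreal (chain_prob P \<pi>) * (c + g \<pi>) \<partial>count_space (fplays T E y))
     = (\<integral>\<^sup>+\<pi>. c * ennreal (chain_prob P \<pi>) + ennreal (chain_prob P \<pi>) * g \<pi> \<partial>count_space (fplays T E y))"
    by (intro nn_integral_cong) (simp add: distrib_left mult.commute)
  also have "\<dots> = (\<integral>\<^sup>+\<pi>. c * ennreal (chain_prob P \<pi>) \<partial>count_space (fplays T E y)) + path_integral P g y"
    unfolding path_integral_def by (rule nn_integral_add) auto
  also have "\<dots> = c * reach_chain P y + path_integral P g y"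
    unfolding reach_chain_def path_integral_def by (subst nn_integral_cmult) auto
  finally show ?thesis .
qed

lemma length_potential_exists:
  assumes P: "chain_on_E P" and acc: "T_accessible P"
  obtains \<psi> where "\<And>y. 0 \<le> \<psi> y"
    and "\<And>z. z \<notin> T \<Longrightarrow> 1 + (\<Sum>y\<in>E `` {z}. pmf (P z) y * \<psi> y) \<le> \<psi> z"
proof -
  let ?r = "access_rank P"
  obtain \<delta> where \<delta>: "0 < \<delta>" "\<delta> \<le> 1" and \<delta>_le: "\<And>a b. 0 < pmf (P a) b \<Longrightarrow> \<delta> \<le> pmf (P a) b"
    using pmf_positive_lower_bound by blast
  define R where "R = Max (range ?r)"
  have r_le: "?r y \<le> R" for y unfolding R_def by simp
  obtain b where b_Suc: "\<And>k. b (Suc k) = \<delta> * b k - 1" and b_ge_1: "\<And>k. k \<le> R \<Longrightarrow> 1 \<le> b k"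
    and b_dec: "\<And>j k. j \<le> k \<Longrightarrow> k \<le> R \<Longrightarrow> b k \<le> b j"
    using contracting_recurrence_bounded[OF \<delta>] by blast
  define \<psi> where "\<psi> y = b 0 - b (?r y)" for y
  have "\<psi> y \<ge> 0" for y unfolding \<psi>_def using b_dec[of 0 "?r y"] r_le[of y] by simp
  moreover have "1 + (\<Sum>y\<in>E `` {z}. pmf (P z) y * \<psi> y) \<le> \<psi> z" if z: "z \<notin> T" for z
  proof -
    obtain y0 where y0: "(z, y0) \<in> E" "pmf (P z) y0 > 0" "?r y0 < ?r z"
      using access_rank_step[OF acc z] by blast
    then obtain k where k: "?r z = Suc k" by (cases "?r z") auto
    have kR: "Suc k \<le> R" using r_le[of z] k by simp
    have "(\<Sum>y\<in>E `` {z}. pmf (P z) y * \<psi> y)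
        = (\<Sum>y\<in>E `` {z}. pmf (P z) y) * b 0 - (\<Sum>y\<in>E `` {z}. pmf (P z) y * b (?r y))"
      unfolding \<psi>_def by (simp add: right_diff_distrib sum_subtractf sum_distrib_right)
    also have "\<dots> = b 0 - (\<Sum>y\<in>E `` {z}. pmf (P z) y * b (?r y))" using sum_pmf_succ[OF P z] by simp
    also have "\<dots> \<le> b 0 - pmf (P z) y0 * b (?r y0)"
    proof -
      have "pmf (P z) y0 * b (?r y0) \<le> (\<Sum>y\<in>E `` {z}. pmf (P z) y * b (?r y))"
        using y0(1) by (intro member_le_sum) (auto intro!: mult_nonneg_nonneg order_trans[OF _ b_ge_1[OF r_le]])
      then show ?thesis by simp
    qed
    also have "\<dots> \<le> b 0 - \<delta> * b k"
    proof -
      have "b k \<le> b (?r y0)" using y0(3) k kR by (intro b_dec) auto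
      moreover have "\<delta> \<le> pmf (P z) y0" using \<delta>_le y0(2) by simp
      moreover have "b k \<ge> 0" using b_ge_1[of k] kR by simp
      ultimately have "\<delta> * b k \<le> pmf (P z) y0 * b (?r y0)" using \<delta> by (intro mult_mono) auto
      then show ?thesis by simp
    qed
    finally have "1 + (\<Sum>y\<in>E `` {z}. pmf (P z) y * \<psi> y) \<le> 1 + b 0 - \<delta> * b k" by simp
    also have "\<dots> = \<psi> z" unfolding \<psi>_def k b_Suc by simp
    finally show ?thesis .
  qed
  ultimately show ?thesis using that by blast
qed

lemma exp_len_SUP_truncated:
  "exp_len P x = (SUP m. path_integral P (\<lambda>\<pi>. ennreal (min (path_len \<pi>) (real m))) x)"
proof -
  let ?g = "\<lambda>m \<pi>. ennreal (min (path_len \<pi>) (real m))"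
  have "(SUP m. ?g m \<pi>) = ennreal (path_len \<pi>)" for \<pi>
  proof (rule antisym)
    show "(SUP m. ?g m \<pi>) \<le> ennreal (path_len \<pi>)" by (intro SUP_least ennreal_leI) auto
    have "?g (length \<pi>) \<pi> = ennreal (path_len \<pi>)" unfolding path_len_def by simp
    then show "ennreal (path_len \<pi>) \<le> (SUP m. ?g m \<pi>)" by (metis SUP_upper UNIV_I)
  qed
  then have "exp_len P x = path_integral P (\<lambda>\<pi>. SUP m. ?g m \<pi>) x" unfolding exp_len_def by simp
  also have "\<dots> = (SUP m. path_integral P (?g m) x)"
    by (rule path_integral_SUP) (auto simp: incseq_def le_fun_def intro!: ennreal_leI)
  finally show ?thesis .
qed

lemma exp_len_le_potential:
  assumes P: "chain_on_E P" and acc: "T_accessible P" and \<psi>_nonneg: "\<And>y. 0 \<le> \<psi> y"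
    and \<psi>_step: "\<And>z. z \<notin> T \<Longrightarrow> 1 + (\<Sum>y\<in>E `` {z}. pmf (P z) y * \<psi> y) \<le> \<psi> z"
  shows "exp_len P x \<le> ennreal (\<psi> x)"
proof -
  define g where "g m \<pi> = ennreal (min (path_len \<pi>) (real m))" for m and \<pi> :: "'v list"
  have g_Cons: "g (Suc m) (z # \<pi>) = 1 + g m \<pi>" if "\<pi> \<noteq> []" for m z \<pi>
  proof -
    have "min (1 + path_len \<pi>) (real (Suc m)) = 1 + min (path_len \<pi>) (real m)" by simp
    moreover have "ennreal (1 + min (path_len \<pi>) (real m)) = 1 + ennreal (min (path_len \<pi>) (real m))"
      using path_len_nonneg[of \<pi>] by (subst ennreal_plus) auto
    ultimately show ?thesis unfolding g_def using path_len_Cons[OF that] by simp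
  qed
  have "path_integral P (g m) z \<le> ennreal (\<psi> z)" for m z
  proof (induction m arbitrary: z)
    case 0
    have "path_integral P (g 0) z = path_integral P (\<lambda>_. 0) z" unfolding g_def by (simp add: path_len_nonneg)
    also have "\<dots> = 0" unfolding path_integral_def by simp
    finally show ?case by simp
  next
    case (Suc m)
    show ?case
    proof (cases "z \<in> T")
      case True
      then show ?thesis by (simp add: path_integral_T g_def)
    next
      case False
      have "path_integral P (g (Suc m)) z = (\<Sum>y\<in>E `` {z}. ennreal (pmf (P z) y) *
            (\<integral>\<^sup>+\<pi>. ennreal (chain_prob P \<pi>) * (1 + g m \<pi>) \<partial>count_space (fplays T E y)))"
        unfolding path_integral_step[OF False]
        by (intro sum.cong refl arg_cong2[where f="(*)"] nn_integral_cong) (simp add: g_Cons fplays_hd)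
      also have "\<dots> = (\<Sum>y\<in>E `` {z}. ennreal (pmf (P z) y) * (1 + path_integral P (g m) y))"
        using path_integral_const_plus reach_chain_eq_1[OF P acc] by simp
      also have "\<dots> \<le> (\<Sum>y\<in>E `` {z}. ennreal (pmf (P z) y) * (1 + ennreal (\<psi> y)))"
        by (intro sum_mono mult_left_mono add_left_mono Suc.IH) auto
      also have "\<dots> = ennreal (\<Sum>y\<in>E `` {z}. pmf (P z) y * (1 + \<psi> y))"
        using \<psi>_nonneg by (subst sum_ennreal[symmetric]) (auto simp: ennreal_mult ennreal_plus intro!: sum.cong)
      also have "\<dots> = ennreal (1 + (\<Sum>y\<in>E `` {z}. pmf (P z) y * \<psi> y))"
        using sum_pmf_succ[OF P False] by (simp add: distrib_left sum.distrib)
      also have "\<dots> \<le> ennreal (\<psi> z)" using \<psi>_step[OF False] by (rule ennreal_leI)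
      finally show ?thesis .
    qed
  qed
  then show ?thesis unfolding exp_len_SUP_truncated g_def by (intro SUP_least)
qed

lemma exp_len_finite:
  assumes "chain_on_E P" and "T_accessible P"
  shows "exp_len P x < top"
proof -
  obtain \<psi> where "\<And>y. 0 \<le> \<psi> y" "\<And>z. z \<notin> T \<Longrightarrow> 1 + (\<Sum>y\<in>E `` {z}. pmf (P z) y * \<psi> y) \<le> \<psi> z"
    using length_potential_exists[OF assms] by blast
  then show ?thesis using exp_len_le_potential[OF assms] order.strict_trans1 ennreal_less_top by blast
qed

definition weight_bound :: real where "weight_bound = (\<Sum>a\<in>UNIV. \<Sum>b\<in>UNIV. \<bar>real_of_int (w a b)\<bar>)"

lemma abs_weight_le_bound: "\<bar>real_of_int (w a b)\<bar> \<le> weight_bound"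
proof -
  have "\<bar>real_of_int (w a b)\<bar> \<le> (\<Sum>b\<in>UNIV. \<bar>real_of_int (w a b)\<bar>)"
    by (rule member_le_sum) auto
  also have "\<dots> \<le> weight_bound" unfolding weight_bound_def by (rule member_le_sum) (auto intro: sum_nonneg)
  finally show ?thesis .
qed

lemma weight_bound_nonneg: "weight_bound \<ge> 0" using abs_weight_le_bound[of undefined undefined] by simp

definition weight :: "'v list \<Rightarrow> real" where "weight \<pi> = real_of_int (path_weight w \<pi>)"

lemma weight_single [simp]: "weight [x] = 0"
  unfolding weight_def path_weight_def by simp

lemma abs_weight_le: "\<bar>weight \<pi>\<bar> \<le> weight_bound * path_len \<pi>"
proof -
  have "\<bar>weight \<pi>\<bar> = \<bar>\<Sum>i<length \<pi> - 1. real_of_int (w (\<pi> ! i) (\<pi> ! Suc i))\<bar>"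
    unfolding weight_def path_weight_def by simp
  also have "\<dots> \<le> (\<Sum>i<length \<pi> - 1. \<bar>real_of_int (w (\<pi> ! i) (\<pi> ! Suc i))\<bar>)" by (rule sum_abs)
  also have "\<dots> \<le> (\<Sum>i<length \<pi> - 1. weight_bound)" by (intro sum_mono abs_weight_le_bound)
  also have "\<dots> = weight_bound * path_len \<pi>" unfolding path_len_def by simp
  finally show ?thesis .
qed

lemma weight_Cons: "\<pi> \<noteq> [] \<Longrightarrow> weight (x # \<pi>) = real_of_int (w x (hd \<pi>)) + weight \<pi>"
  unfolding weight_def by (simp add: path_weight_Cons)

definition exp_pos :: "('v \<Rightarrow> 'v pmf) \<Rightarrow> 'v \<Rightarrow> ennreal" where
  "exp_pos P x = (\<integral>\<^sup>+\<pi>. ennreal (chain_prob P \<pi> * max 0 (weight \<pi>)) \<partial>count_space (fplays T E x))"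

definition exp_neg :: "('v \<Rightarrow> 'v pmf) \<Rightarrow> 'v \<Rightarrow> ennreal" where
  "exp_neg P x = (\<integral>\<^sup>+\<pi>. ennreal (chain_prob P \<pi> * max 0 (- weight \<pi>)) \<partial>count_space (fplays T E x))"

definition exp_shifted :: "('v \<Rightarrow> 'v pmf) \<Rightarrow> 'v \<Rightarrow> ennreal" where
  "exp_shifted P x = path_integral P (\<lambda>\<pi>. ennreal (weight \<pi> + weight_bound * path_len \<pi>)) x"

lemma shifted_weight_nonneg: "weight \<pi> + weight_bound * path_len \<pi> \<ge> 0" using abs_weight_le[of \<pi>] by simp

lemma path_integral_scaled_len: "(\<integral>\<^sup>+\<pi>. ennreal (chain_prob P \<pi> * (c * path_len \<pi>)) \<partial>count_space (fplays T E x)) = ennreal c * exp_len P x"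
  if "c \<ge> 0" for c
proof -
  have "(\<integral>\<^sup>+\<pi>. ennreal (chain_prob P \<pi> * (c * path_len \<pi>)) \<partial>count_space (fplays T E x))
      = (\<integral>\<^sup>+\<pi>. ennreal c * (ennreal (chain_prob P \<pi>) * ennreal (path_len \<pi>)) \<partial>count_space (fplays T E x))"
    using that by (intro nn_integral_cong) (simp add: ennreal_mult chain_prob_nonneg path_len_nonneg mult_ac)
  also have "\<dots> = ennreal c * exp_len P x" unfolding exp_len_def path_integral_def by (rule nn_integral_cmult) simp
  finally show ?thesis .
qed

lemma exp_len_scaled_finite: "chain_on_E P \<Longrightarrow> T_accessible P \<Longrightarrow> ennreal c * exp_len P x < top"
  using exp_len_finite[of P x] by (simp add: ennreal_mult_less_top)

lemma exp_pos_finite: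
  assumes "chain_on_E P" "T_accessible P" shows "exp_pos P x < top"
proof -
  have "exp_pos P x \<le> (\<integral>\<^sup>+\<pi>. ennreal (chain_prob P \<pi> * (weight_bound * path_len \<pi>)) \<partial>count_space (fplays T E x))"
    unfolding exp_pos_def using abs_weight_le chain_prob_nonneg
    by (intro nn_integral_mono ennreal_leI mult_left_mono) (auto simp: abs_le_iff intro!: mult_nonneg_nonneg weight_bound_nonneg path_len_nonneg)
  also have "\<dots> = ennreal weight_bound * exp_len P x" using path_integral_scaled_len weight_bound_nonneg by simp
  finally show ?thesis using exp_len_scaled_finite[OF assms] order.strict_trans1 by blast
qed

lemma exp_neg_finite:
  assumes "chain_on_E P" "T_accessible P" shows "exp_neg P x < top"
proof -
  have "exp_neg P x \<le> (\<integral>\<^sup>+\<pi>. ennreal (chain_prob P \<pi> * (weight_bound * path_len \<pi>)) \<partial>count_space (fplays T E x))"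
    unfolding exp_neg_def using abs_weight_le chain_prob_nonneg
    by (intro nn_integral_mono ennreal_leI mult_left_mono) (auto simp: abs_le_iff intro!: mult_nonneg_nonneg weight_bound_nonneg path_len_nonneg)
  also have "\<dots> = ennreal weight_bound * exp_len P x" using path_integral_scaled_len weight_bound_nonneg by simp
  finally show ?thesis using exp_len_scaled_finite[OF assms] order.strict_trans1 by blast
qed

lemma exp_shifted_eq: "exp_shifted P x = (\<integral>\<^sup>+\<pi>. ennreal (chain_prob P \<pi> * (weight \<pi> + weight_bound * path_len \<pi>)) \<partial>count_space (fplays T E x))"
  unfolding exp_shifted_def path_integral_def using shifted_weight_nonneg by (intro nn_integral_cong) (simp add: ennreal_mult chain_prob_nonneg)

lemma exp_shifted_finite:
  assumes "chain_on_E P" "T_accessible P" shows "exp_shifted P x < top"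
proof -
  have "exp_shifted P x \<le> (\<integral>\<^sup>+\<pi>. ennreal (chain_prob P \<pi> * ((2 * weight_bound) * path_len \<pi>)) \<partial>count_space (fplays T E x))"
    unfolding exp_shifted_eq
  proof (intro nn_integral_mono ennreal_leI mult_left_mono chain_prob_nonneg)
    fix \<pi>
    show "weight \<pi> + weight_bound * path_len \<pi> \<le> 2 * weight_bound * path_len \<pi>"
      using abs_weight_le[of \<pi>] by (simp add: abs_le_iff algebra_simps)
  qed
  also have "\<dots> = ennreal (2 * weight_bound) * exp_len P x" using path_integral_scaled_len weight_bound_nonneg by simp
  finally show ?thesis using exp_len_scaled_finite[OF assms] order.strict_trans1 by blast
qed

lemma exp_pos_shift_eq: "exp_pos P x + ennreal weight_bound * exp_len P x = exp_shifted P x + exp_neg P x"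
proof -
  have "exp_pos P x + ennreal weight_bound * exp_len P x = (\<integral>\<^sup>+\<pi>. ennreal (chain_prob P \<pi> * max 0 (weight \<pi>)) + ennreal (chain_prob P \<pi> * (weight_bound * path_len \<pi>)) \<partial>count_space (fplays T E x))"
    unfolding exp_pos_def path_integral_scaled_len[OF weight_bound_nonneg, symmetric] by (rule nn_integral_add[symmetric]) auto
  also have "\<dots> = (\<integral>\<^sup>+\<pi>. ennreal (chain_prob P \<pi> * (weight \<pi> + weight_bound * path_len \<pi>)) + ennreal (chain_prob P \<pi> * max 0 (- weight \<pi>)) \<partial>count_space (fplays T E x))"
  proof (intro nn_integral_cong)
    fix \<pi>
    have a: "chain_prob P \<pi> * max 0 (weight \<pi>) + chain_prob P \<pi> * (weight_bound * path_len \<pi>) = chain_prob P \<pi> * (weight \<pi> + weight_bound * path_len \<pi>) + chain_prob P \<pi> * max 0 (- weight \<pi>)"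
      by (simp add: algebra_simps max_def)
    show "ennreal (chain_prob P \<pi> * max 0 (weight \<pi>)) + ennreal (chain_prob P \<pi> * (weight_bound * path_len \<pi>)) = ennreal (chain_prob P \<pi> * (weight \<pi> + weight_bound * path_len \<pi>)) + ennreal (chain_prob P \<pi> * max 0 (- weight \<pi>))"
      using a chain_prob_nonneg[of P \<pi>] weight_bound_nonneg path_len_nonneg[of \<pi>] shifted_weight_nonneg[of \<pi>]
      by (simp add: ennreal_plus[symmetric] del: ennreal_plus)
  qed
  also have "\<dots> = exp_shifted P x + exp_neg P x"
    unfolding exp_shifted_eq exp_neg_def by (rule nn_integral_add) auto
  finally show ?thesis .
qed

definition exp_payoff :: "('v \<Rightarrow> 'v pmf) \<Rightarrow> 'v \<Rightarrow> real" where
  "exp_payoff P x = enn2real (exp_pos P x) - enn2real (exp_neg P x)"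

lemma exp_payoff_shifted:
  assumes "chain_on_E P" "T_accessible P"
  shows "exp_payoff P x = enn2real (exp_shifted P x) - weight_bound * enn2real (exp_len P x)"
proof -
  have "enn2real (exp_pos P x + ennreal weight_bound * exp_len P x) = enn2real (exp_shifted P x + exp_neg P x)" using exp_pos_shift_eq by simp
  then have "enn2real (exp_pos P x) + weight_bound * enn2real (exp_len P x) = enn2real (exp_shifted P x) + enn2real (exp_neg P x)"
    using exp_pos_finite[OF assms] exp_neg_finite[OF assms] exp_shifted_finite[OF assms] exp_len_scaled_finite[OF assms, of weight_bound] exp_len_finite[OF assms, of x] weight_bound_nonneg
    by (simp add: enn2real_plus enn2real_mult)
  then show ?thesis unfolding exp_payoff_def by simp
qed

lemma exp_shifted_step:
  assumes x: "x \<notin> T"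
  shows "exp_shifted P x = (\<Sum>y\<in>E `` {x}. ennreal (pmf (P x) y) * (ennreal (real_of_int (w x y) + weight_bound) * reach_chain P y + exp_shifted P y))"
proof -
  have "exp_shifted P x = (\<Sum>y\<in>E `` {x}. ennreal (pmf (P x) y) *
            (\<integral>\<^sup>+\<pi>. ennreal (chain_prob P \<pi>) * ennreal (weight (x # \<pi>) + weight_bound * path_len (x # \<pi>)) \<partial>count_space (fplays T E y)))"
    unfolding exp_shifted_def by (rule path_integral_step[OF x])
  also have "\<dots> = (\<Sum>y\<in>E `` {x}. ennreal (pmf (P x) y) *
            (\<integral>\<^sup>+\<pi>. ennreal (chain_prob P \<pi>) * (ennreal (real_of_int (w x y) + weight_bound) + ennreal (weight \<pi> + weight_bound * path_len \<pi>)) \<partial>count_space (fplays T E y)))"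
  proof (intro sum.cong refl arg_cong2[where f="(*)"] nn_integral_cong)
    fix y \<pi> assume "\<pi> \<in> space (count_space (fplays T E y))"
    then have ne: "\<pi> \<noteq> []" "hd \<pi> = y" using fplays_hd[of \<pi> T E y] by auto
    have "weight (x # \<pi>) + weight_bound * path_len (x # \<pi>) = (real_of_int (w x y) + weight_bound) + (weight \<pi> + weight_bound * path_len \<pi>)"
      using weight_Cons[OF ne(1)] path_len_Cons[OF ne(1)] ne(2) by (simp add: algebra_simps)
    moreover have "real_of_int (w x y) + weight_bound \<ge> 0" using abs_weight_le_bound[of x y] by simp
    ultimately show "ennreal (weight (x # \<pi>) + weight_bound * path_len (x # \<pi>)) = ennreal (real_of_int (w x y) + weight_bound) + ennreal (weight \<pi> + weight_bound * path_len \<pi>)"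
      using shifted_weight_nonneg[of \<pi>] by (simp add: ennreal_plus)
  qed
  also have "\<dots> = (\<Sum>y\<in>E `` {x}. ennreal (pmf (P x) y) * (ennreal (real_of_int (w x y) + weight_bound) * reach_chain P y + exp_shifted P y))"
    unfolding exp_shifted_def by (intro sum.cong refl arg_cong2[where f="(*)"] path_integral_const_plus)
  finally show ?thesis .
qed

lemma exp_len_step:
  assumes x: "x \<notin> T"
  shows "exp_len P x = (\<Sum>y\<in>E `` {x}. ennreal (pmf (P x) y) * (reach_chain P y + exp_len P y))"
proof -
  have "exp_len P x = (\<Sum>y\<in>E `` {x}. ennreal (pmf (P x) y) *
            (\<integral>\<^sup>+\<pi>. ennreal (chain_prob P \<pi>) * ennreal (path_len (x # \<pi>)) \<partial>count_space (fplays T E y)))"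
    unfolding exp_len_def by (rule path_integral_step[OF x])
  also have "\<dots> = (\<Sum>y\<in>E `` {x}. ennreal (pmf (P x) y) *
            (\<integral>\<^sup>+\<pi>. ennreal (chain_prob P \<pi>) * (1 + ennreal (path_len \<pi>)) \<partial>count_space (fplays T E y)))"
  proof (intro sum.cong refl arg_cong2[where f="(*)"] nn_integral_cong)
    fix y \<pi> assume "\<pi> \<in> space (count_space (fplays T E y))"
    then have ne: "\<pi> \<noteq> []" using fplays_hd[of \<pi> T E y] by auto
    show "ennreal (path_len (x # \<pi>)) = 1 + ennreal (path_len \<pi>)"
      using path_len_Cons[OF ne] path_len_nonneg[of \<pi>] by (simp add: ennreal_plus)
  qed
  also have "\<dots> = (\<Sum>y\<in>E `` {x}. ennreal (pmf (P x) y) * (reach_chain P y + exp_len P y))"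
    unfolding exp_len_def using path_integral_const_plus[where c = 1] by simp
  finally show ?thesis .
qed

lemma sum_ennreal_mult_add:
  assumes "\<And>y. y \<in> S \<Longrightarrow> X y = ennreal (a y)" and "\<And>y. a y \<ge> 0" "\<And>y. c y \<ge> 0" "\<And>y. p y \<ge> 0"
  shows "(\<Sum>y\<in>S. ennreal (p y) * (ennreal (c y) + X y)) = ennreal (\<Sum>y\<in>S. p y * (c y + a y))"
proof -
  have "(\<Sum>y\<in>S. ennreal (p y) * (ennreal (c y) + X y)) = (\<Sum>y\<in>S. ennreal (p y * (c y + a y)))"
    using assms by (intro sum.cong refl) (simp add: ennreal_mult ennreal_plus)
  also have "\<dots> = ennreal (\<Sum>y\<in>S. p y * (c y + a y))"
    using assms by (intro sum_ennreal) simp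
  finally show ?thesis .
qed

lemma exp_payoff_T: "x \<in> T \<Longrightarrow> exp_payoff P x = 0"
  unfolding exp_payoff_def exp_pos_def exp_neg_def by (simp add: fplays_T nn_integral_count_space_finite)

text \<open>The one-step equation is first derived for the expectations \<open>exp_shifted\<close> and \<open>exp_len\<close> of
  nonnegative quantities, which determine \<open>exp_payoff\<close> by \<open>exp_payoff_shifted\<close>.\<close>

lemma exp_payoff_step:
  assumes P: "chain_on_E P" and acc: "T_accessible P" and x: "x \<notin> T"
  shows "exp_payoff P x = (\<Sum>y\<in>E `` {x}. pmf (P x) y * (real_of_int (w x y) + exp_payoff P y))"
proof -
  have r1: "reach_chain P y = 1" for y using reach_chain_eq_1[OF P acc] .
  define A where "A y = enn2real (exp_shifted P y)" for y
  define L where "L y = enn2real (exp_len P y)" for y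
  have Af: "exp_shifted P y = ennreal (A y)" for y unfolding A_def using exp_shifted_finite[OF P acc] by simp
  have Lff: "exp_len P y = ennreal (L y)" for y unfolding L_def using exp_len_finite[OF P acc] by simp
  have Ann: "A y \<ge> 0" for y unfolding A_def by simp
  have Lnn: "L y \<ge> 0" for y unfolding L_def by simp
  have wK: "real_of_int (w a b) + weight_bound \<ge> 0" for a b using abs_weight_le_bound[of a b] by simp
  have wKA: "0 \<le> (real_of_int (w a b) + weight_bound) + A y" for a b y using wK Ann by (meson add_nonneg_nonneg)
  have "ennreal (A x) = (\<Sum>y\<in>E `` {x}. ennreal (pmf (P x) y) * (ennreal (real_of_int (w x y) + weight_bound) + exp_shifted P y))"
    using exp_shifted_step[OF x, of P] Af[of x] r1 by simp
  also have "\<dots> = ennreal (\<Sum>y\<in>E `` {x}. pmf (P x) y * ((real_of_int (w x y) + weight_bound) + A y))"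
    by (rule sum_ennreal_mult_add[where c="\<lambda>y. real_of_int (w x y) + weight_bound" and a=A]) (auto simp: Af Ann wK)
  finally have Ax: "A x = (\<Sum>y\<in>E `` {x}. pmf (P x) y * ((real_of_int (w x y) + weight_bound) + A y))"
    using wKA Ann by (subst (asm) ennreal_inj) (auto intro!: sum_nonneg mult_nonneg_nonneg)
  have "ennreal (L x) = (\<Sum>y\<in>E `` {x}. ennreal (pmf (P x) y) * (ennreal 1 + exp_len P y))"
    using exp_len_step[OF x, of P] Lff[of x] r1 by simp
  also have "\<dots> = ennreal (\<Sum>y\<in>E `` {x}. pmf (P x) y * (1 + L y))"
    by (rule sum_ennreal_mult_add[where c="\<lambda>y. 1" and a=L]) (auto simp: Lff Lnn)
  finally have Lx: "L x = (\<Sum>y\<in>E `` {x}. pmf (P x) y * (1 + L y))"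
    using Lnn by (subst (asm) ennreal_inj) (auto intro!: sum_nonneg mult_nonneg_nonneg add_nonneg_nonneg)
  have "exp_payoff P x = A x - weight_bound * L x" using exp_payoff_shifted[OF P acc] unfolding A_def L_def .
  also have "\<dots> = (\<Sum>y\<in>E `` {x}. pmf (P x) y * ((real_of_int (w x y) + weight_bound) + A y) - weight_bound * (pmf (P x) y * (1 + L y)))"
    unfolding Ax Lx by (simp add: sum_subtractf sum_distrib_left)
  also have "\<dots> = (\<Sum>y\<in>E `` {x}. pmf (P x) y * (real_of_int (w x y) + (A y - weight_bound * L y)))"
    by (intro sum.cong refl) (simp add: algebra_simps)
  also have "\<dots> = (\<Sum>y\<in>E `` {x}. pmf (P x) y * (real_of_int (w x y) + exp_payoff P y))"
    using exp_payoff_shifted[OF P acc] unfolding A_def L_def by simp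
  finally show ?thesis .
qed

lemma maximum_principle:
  fixes d :: "'v \<Rightarrow> real"
  assumes P: "chain_on_E P" and acc: "T_accessible P"
    and sub: "\<And>x. x \<notin> T \<Longrightarrow> d x \<le> (\<Sum>y\<in>E `` {x}. pmf (P x) y * d y)"
    and bT: "\<And>x. x \<in> T \<Longrightarrow> d x \<le> 0"
  shows "d x \<le> 0"
proof -
  have "- d x \<ge> 0"
  proof (rule minimum_principle[OF P acc, of "\<lambda>y. - d y"])
    fix y assume "y \<notin> T"
    then show "(\<Sum>z\<in>E `` {y}. pmf (P y) z * - d z) \<le> - d y" using sub[of y] by (simp add: sum_negf)
  next
    fix y assume "y \<in> T" then show "0 \<le> - d y" using bT by simp
  qed
  then show ?thesis by simp
qed

lemma exp_TP_eq_exp_payoff: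
  assumes P: "chain_on_E (induced_chain \<rho> \<tau>)" and acc: "T_accessible (induced_chain \<rho> \<tau>)"
  shows "exp_TP VMin T E w \<rho> \<tau> v = ereal (exp_payoff (induced_chain \<rho> \<tau>) v)"
proof -
  let ?P = "induced_chain \<rho> \<tau>"
  have r: "reach_prob VMin T E \<rho> \<tau> v = 1" unfolding reach_prob_eq_reach_chain using reach_chain_eq_1[OF P acc] .
  have pos_eq: "(\<integral>\<^sup>+ \<pi>. ennreal (path_prob VMin \<rho> \<tau> \<pi> * max 0 (real_of_int (path_weight w \<pi>))) \<partial>count_space (fplays T E v)) = exp_pos ?P v"
    unfolding exp_pos_def path_prob_eq_chain_prob weight_def ..
  have neg_eq: "(\<integral>\<^sup>+ \<pi>. ennreal (path_prob VMin \<rho> \<tau> \<pi> * max 0 (- real_of_int (path_weight w \<pi>))) \<partial>count_space (fplays T E v)) = exp_neg ?P v"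
    unfolding exp_neg_def path_prob_eq_chain_prob weight_def ..
  have e1: "enn2ereal (exp_pos ?P v) = ereal (enn2real (exp_pos ?P v))"
  proof -
    have "enn2ereal (ennreal (enn2real (exp_pos ?P v))) = ereal (enn2real (exp_pos ?P v))" by (rule enn2ereal_ennreal) simp
    then show ?thesis using exp_pos_finite[OF P acc, of v] by simp
  qed
  have e2: "enn2ereal (exp_neg ?P v) = ereal (enn2real (exp_neg ?P v))"
  proof -
    have "enn2ereal (ennreal (enn2real (exp_neg ?P v))) = ereal (enn2real (exp_neg ?P v))" by (rule enn2ereal_ennreal) simp
    then show ?thesis using exp_neg_finite[OF P acc, of v] by simp
  qed
  have "enn2ereal (exp_pos ?P v) - enn2ereal (exp_neg ?P v) = ereal (enn2real (exp_pos ?P v)) - ereal (enn2real (exp_neg ?P v))"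
    unfolding e1 e2 ..
  then show ?thesis unfolding exp_TP_def r pos_eq neg_eq exp_payoff_def by simp
qed

section \<open>Expected payoff under memoryless strategies\<close>

lemma induced_chain_on_E:
  assumes "mless_strat VMin E \<rho>" and "mless_strat VMax E \<tau>"
  shows "chain_on_E (induced_chain \<rho> \<tau>)"
  using assms VMax_iff unfolding chain_on_E_def mless_strat_def by auto

lemma mless_strat_dirac: "\<forall>x \<in> V. (x, t x) \<in> E \<Longrightarrow> mless_strat V E (dirac_strat t)"
  unfolding mless_strat_def by auto

lemma T_accessible_by_ranking:
  fixes rk :: "'v \<Rightarrow> nat"
  assumes rk0: "\<forall>x. rk x = 0 \<longleftrightarrow> x \<in> T"
    and descent: "\<forall>x. x \<notin> T \<longrightarrow> (\<exists>y. (x, y) \<in> E \<and> pmf (P x) y > 0 \<and> rk y < rk x)"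
  shows "T_accessible P"
proof -
  have "\<exists>\<pi>\<in>fplays T E x. chain_prob P \<pi> > 0" if "rk x \<le> k" for k x
    using that
  proof (induction k arbitrary: x)
    case 0
    then have "x \<in> T" using rk0 by simp
    then show ?case by (intro bexI[of _ "[x]"]) (simp_all add: fplays_T)
  next
    case (Suc k)
    show ?case
    proof (cases "x \<in> T")
      case True
      then show ?thesis by (intro bexI[of _ "[x]"]) (simp_all add: fplays_T)
    next
      case False
      then obtain y where y: "(x, y) \<in> E" "pmf (P x) y > 0" "rk y < rk x" using descent by blast
      moreover from y(3) have "rk y \<le> k" using Suc.prems by simp
      ultimately obtain \<pi> where \<pi>: "\<pi> \<in> fplays T E y" "chain_prob P \<pi> > 0" using Suc.IH by blast
      have "x # \<pi> \<in> fplays T E x" using Cons_in_fplays[OF False y(1) \<pi>(1)] .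
      moreover have "chain_prob P (x # \<pi>) > 0"
        using chain_prob_Cons[of \<pi> P x] fplays_hd[OF \<pi>(1)] y(2) \<pi>(2) by simp
      ultimately show ?thesis by blast
    qed
  qed
  then show ?thesis unfolding T_accessible_def by blast
qed

lemma sum_pmf_le_support:
  assumes P: "chain_on_E P" and x: "x \<notin> T"
    and H: "\<And>y. (x, y) \<in> E \<Longrightarrow> pmf (P x) y > 0 \<Longrightarrow> a y \<le> c"
  shows "(\<Sum>y\<in>E `` {x}. pmf (P x) y * a y) \<le> c"
proof -
  have "(\<Sum>y\<in>E `` {x}. pmf (P x) y * a y) \<le> (\<Sum>y\<in>E `` {x}. pmf (P x) y * c)"
  proof (intro sum_mono)
    fix y assume y: "y \<in> E `` {x}"
    show "pmf (P x) y * a y \<le> pmf (P x) y * c"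
    proof (cases "pmf (P x) y > 0")
      case True then show ?thesis using H y by simp
    next
      case False then have "pmf (P x) y = 0" using pmf_nonneg[of "P x" y] by simp
      then show ?thesis by simp
    qed
  qed
  also have "\<dots> = c" using sum_pmf_succ[OF P x] by (simp add: sum_distrib_right[symmetric])
  finally show ?thesis .
qed

lemma exp_payoff_le_supersolution:
  fixes g :: "'v \<Rightarrow> real"
  assumes P: "chain_on_E P" and acc: "T_accessible P"
    and T0: "\<And>x. x \<in> T \<Longrightarrow> 0 \<le> g x"
    and super: "\<And>x. x \<notin> T \<Longrightarrow> (\<Sum>y\<in>E `` {x}. pmf (P x) y * (real_of_int (w x y) + g y)) \<le> g x"
  shows "exp_payoff P v \<le> g v"
proof -
  have "exp_payoff P v - g v \<le> 0"
  proof (rule maximum_principle[OF P acc, of "\<lambda>y. exp_payoff P y - g y"])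
    fix x assume x: "x \<notin> T"
    have "exp_payoff P x - g x \<le> (\<Sum>y\<in>E `` {x}. pmf (P x) y * (real_of_int (w x y) + exp_payoff P y))
        - (\<Sum>y\<in>E `` {x}. pmf (P x) y * (real_of_int (w x y) + g y))"
      using exp_payoff_step[OF P acc x] super[OF x] by simp
    also have "\<dots> = (\<Sum>y\<in>E `` {x}. pmf (P x) y * (exp_payoff P y - g y))"
      by (simp add: sum_subtractf[symmetric] algebra_simps)
    finally show "exp_payoff P x - g x \<le> (\<Sum>y\<in>E `` {x}. pmf (P x) y * (exp_payoff P y - g y))" .
  qed (use T0 exp_payoff_T in simp)
  then show ?thesis by simp
qed

lemma exp_payoff_ge_subsolution:
  fixes g :: "'v \<Rightarrow> real"
  assumes P: "chain_on_E P" and acc: "T_accessible P"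
    and T0: "\<And>x. x \<in> T \<Longrightarrow> g x \<le> 0"
    and sub: "\<And>x. x \<notin> T \<Longrightarrow> g x \<le> (\<Sum>y\<in>E `` {x}. pmf (P x) y * (real_of_int (w x y) + g y))"
  shows "g v \<le> exp_payoff P v"
proof -
  have "g v - exp_payoff P v \<le> 0"
  proof (rule maximum_principle[OF P acc, of "\<lambda>y. g y - exp_payoff P y"])
    fix x assume x: "x \<notin> T"
    have "g x - exp_payoff P x \<le> (\<Sum>y\<in>E `` {x}. pmf (P x) y * (real_of_int (w x y) + g y))
        - (\<Sum>y\<in>E `` {x}. pmf (P x) y * (real_of_int (w x y) + exp_payoff P y))"
      using exp_payoff_step[OF P acc x] sub[OF x] by simp
    also have "\<dots> = (\<Sum>y\<in>E `` {x}. pmf (P x) y * (g y - exp_payoff P y))"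
      by (simp add: sum_subtractf[symmetric] algebra_simps)
    finally show "g x - exp_payoff P x \<le> (\<Sum>y\<in>E `` {x}. pmf (P x) y * (g y - exp_payoff P y))" .
  qed (use T0 exp_payoff_T in simp)
  then show ?thesis by simp
qed

lemma exp_payoff_dirac:
  assumes P: "chain_on_E P" and acc: "T_accessible P" and x: "x \<notin> T"
    and "P x = return_pmf y" and "(x, y) \<in> E"
  shows "exp_payoff P x = real_of_int (w x y) + exp_payoff P y"
  using exp_payoff_step[OF P acc x] assms(4,5) sum_pmf_return[of "E `` {x}" y] by simp

lemma exp_TP_ge_support:
  assumes P: "chain_on_E (induced_chain \<rho> \<tau>)"
    and W: "\<And>\<pi>. \<pi> \<in> fplays T E v \<Longrightarrow> path_prob VMin \<rho> \<tau> \<pi> > 0 \<Longrightarrow> c \<le> real_of_int (path_weight w \<pi>)"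
  shows "ereal c \<le> exp_TP VMin T E w \<rho> \<tau> v"
proof (cases "reach_prob VMin T E \<rho> \<tau> v < 1")
  case True
  then show ?thesis by (simp add: exp_TP_def)
next
  case False
  let ?prob = "path_prob VMin \<rho> \<tau>" and ?W = "\<lambda>\<pi>. real_of_int (path_weight w \<pi>)"
  have nonneg: "0 \<le> ?prob \<pi>" for \<pi> unfolding path_prob_eq_chain_prob by (rule chain_prob_nonneg)
  have "reach_chain (induced_chain \<rho> \<tau>) v = 1"
    using False reach_chain_le_1[OF P, of v] unfolding reach_prob_eq_reach_chain by (simp add: not_less)
  then have total: "(\<integral>\<^sup>+\<pi>. ennreal (?prob \<pi>) \<partial>count_space (fplays T E v)) = 1"
    unfolding reach_chain_def path_integral_def path_prob_eq_chain_prob by simp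
  have "ennreal (max 0 c) \<le> (\<integral>\<^sup>+\<pi>. ennreal (?prob \<pi> * max 0 (?W \<pi>)) \<partial>count_space (fplays T E v))"
    using W by (intro nn_integral_prob_mult_ge[OF total nonneg] max.mono order_refl) auto
  then have pos: "ereal (max 0 c) \<le> enn2ereal (\<integral>\<^sup>+\<pi>. ennreal (?prob \<pi> * max 0 (?W \<pi>)) \<partial>count_space (fplays T E v))"
    by (metis enn2ereal_ennreal less_eq_ennreal.rep_eq max.cobounded1)
  have "(\<integral>\<^sup>+\<pi>. ennreal (?prob \<pi> * max 0 (- ?W \<pi>)) \<partial>count_space (fplays T E v)) \<le> ennreal (max 0 (- c))"
    using W by (intro nn_integral_prob_mult_le[OF total nonneg] max.mono order_refl) force+
  then have neg: "enn2ereal (\<integral>\<^sup>+\<pi>. ennreal (?prob \<pi> * max 0 (- ?W \<pi>)) \<partial>count_space (fplays T E v)) \<le> ereal (max 0 (- c))"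
    by (metis enn2ereal_ennreal less_eq_ennreal.rep_eq max.cobounded1)
  have "ereal c = ereal (max 0 c) - ereal (max 0 (- c))"
    by (simp only: ereal_minus(1)) (simp add: max_def)
  also have "\<dots> \<le> exp_TP VMin T E w \<rho> \<tau> v"
    unfolding exp_TP_def using False by (simp only: if_False) (rule ereal_minus_mono[OF pos neg])
  finally show ?thesis .
qed

definition opt_mless :: "('v \<Rightarrow> 'v pmf) \<Rightarrow> bool" where
  "opt_mless \<rho> \<longleftrightarrow> mless_strat VMin E \<rho> \<and> (\<forall>v. Val_m_rho VMax VMin T E w \<rho> v = Val_m_bar VMax VMin T E w v)"

lemma dirac_ranking_T_accessible:
  assumes rk: "attractor_ranking s rk" and s: "\<forall>u \<in> VMin. (u, s u) \<in> E"
    and \<tau>: "mless_strat VMax E \<tau>"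
  shows "T_accessible (induced_chain (dirac_strat s) \<tau>)"
proof (rule T_accessible_by_ranking[where rk = rk])
  show "\<forall>x. rk x = 0 \<longleftrightarrow> x \<in> T" using rk unfolding attractor_ranking_def by blast
  show "\<forall>x. x \<notin> T \<longrightarrow> (\<exists>y. (x, y) \<in> E \<and> pmf (induced_chain (dirac_strat s) \<tau> x) y > 0 \<and> rk y < rk x)"
  proof (intro allI impI)
    fix x assume x: "x \<notin> T"
    show "\<exists>y. (x, y) \<in> E \<and> pmf (induced_chain (dirac_strat s) \<tau> x) y > 0 \<and> rk y < rk x"
    proof (cases "x \<in> VMin")
      case True
      then show ?thesis using s rk unfolding attractor_ranking_def by auto
    next
      case False
      then have "x \<in> VMax" using x VMax_iff by blast
      obtain y where y: "y \<in> set_pmf (\<tau> x)" using set_pmf_not_empty[of "\<tau> x"] by blast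
      then have "(x, y) \<in> E" using \<tau> \<open>x \<in> VMax\<close> unfolding mless_strat_def by auto
      then show ?thesis using False y \<open>x \<in> VMax\<close> rk unfolding attractor_ranking_def
        by (intro exI[of _ y]) (auto simp: set_pmf_iff)
    qed
  qed
qed

lemma exp_TP_dirac_le_potential:
  assumes wit: "optimality_witness \<phi> s" and \<tau>: "mless_strat VMax E \<tau>"
  shows "exp_TP VMin T E w (dirac_strat s) \<tau> v \<le> ereal (\<phi> v)"
proof -
  let ?P = "induced_chain (dirac_strat s) \<tau>"
  have \<rho>: "mless_strat VMin E (dirac_strat s)"
    using wit unfolding optimality_witness_def by (intro mless_strat_dirac) blast
  have P: "chain_on_E ?P" by (rule induced_chain_on_E[OF \<rho> \<tau>])
  have acc: "T_accessible ?P"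
    using wit dirac_ranking_T_accessible[OF _ _ \<tau>] unfolding optimality_witness_def by blast
  have "exp_payoff ?P v \<le> \<phi> v"
  proof (rule exp_payoff_le_supersolution[OF P acc])
    show "0 \<le> \<phi> x" if "x \<in> T" for x
      using wit that unfolding optimality_witness_def bellman_potential_def by simp
    show "(\<Sum>y\<in>E `` {x}. pmf (?P x) y * (real_of_int (w x y) + \<phi> y)) \<le> \<phi> x" if x: "x \<notin> T" for x
    proof (rule sum_pmf_le_support[OF P x])
      fix y assume e: "(x, y) \<in> E" and py: "pmf (?P x) y > 0"
      show "real_of_int (w x y) + \<phi> y \<le> \<phi> x"
      proof (cases "x \<in> VMin")
        case True
        then have "y = s x" using py by (simp add: indicator_def split: if_splits)
        then show ?thesis using wit True unfolding optimality_witness_def by blast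
      next
        case False
        then show ?thesis
          using wit x e VMax_iff unfolding optimality_witness_def bellman_potential_def by blast
      qed
    qed
  qed
  then show ?thesis using exp_TP_eq_exp_payoff[OF P acc] by simp
qed

lemma potential_le_Val_m_rho:
  assumes \<phi>: "bellman_potential \<phi>" and \<rho>: "mless_strat VMin E \<rho>"
  shows "ereal (\<phi> v) \<le> Val_m_rho VMax VMin T E w \<rho> v"
proof -
  obtain t where t: "\<forall>x \<in> VMax. (x, t x) \<in> E \<and> \<phi> x = real_of_int (w x (t x)) + \<phi> (t x)"
    using bellman_potential_Max_choice[OF \<phi>] .
  have \<tau>: "mless_strat VMax E (dirac_strat t)" using t by (intro mless_strat_dirac) blast
  have "ereal (\<phi> v) \<le> exp_TP VMin T E w \<rho> (dirac_strat t) v"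
  proof (rule exp_TP_ge_support[OF induced_chain_on_E[OF \<rho> \<tau>]])
    fix \<pi> assume \<pi>: "\<pi> \<in> fplays T E v" and pos: "path_prob VMin \<rho> (dirac_strat t) \<pi> > 0"
    have ne: "\<pi> \<noteq> []" "hd \<pi> = v" "last \<pi> \<in> T"
      and steps: "\<forall>i<length \<pi> - 1. \<pi> ! i \<notin> T \<and> (\<pi> ! i, \<pi> ! Suc i) \<in> E"
      using \<pi> unfolding fplays_def by auto
    let ?N = "length \<pi> - 1"
    have "\<phi> (\<pi> ! j) \<le> real_of_int (w (\<pi> ! j) (\<pi> ! Suc j)) + \<phi> (\<pi> ! Suc j)" if j: "j < ?N" for j
    proof (cases "\<pi> ! j \<in> VMin")
      case True
      then show ?thesis using \<phi> steps j unfolding bellman_potential_def by blast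
    next
      case False
      have "pmf (induced_chain \<rho> (dirac_strat t) (\<pi> ! j)) (\<pi> ! Suc j) > 0"
        using chain_prob_pos_transition[OF pos[unfolded path_prob_eq_chain_prob] j] .
      then have "\<pi> ! Suc j = t (\<pi> ! j)" using False by (simp add: indicator_def split: if_splits)
      moreover have "\<pi> ! j \<in> VMax" using False steps j VMax_iff by blast
      ultimately show ?thesis using t by simp
    qed
    then have "\<phi> (\<pi> ! 0) \<le> real_of_int (\<Sum>j<?N. w (\<pi> ! j) (\<pi> ! Suc j)) + \<phi> (\<pi> ! ?N)"
      using telescope_ge[where p = "\<lambda>i. \<pi> ! i" and \<phi> = \<phi> and N = ?N] by blast
    moreover have "\<pi> ! 0 = v" "\<pi> ! ?N = last \<pi>" using ne by (simp_all add: hd_conv_nth last_conv_nth)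
    ultimately show "\<phi> v \<le> real_of_int (path_weight w \<pi>)"
      using \<phi> ne(3) unfolding bellman_potential_def path_weight_def by simp
  qed
  also have "\<dots> \<le> Val_m_rho VMax VMin T E w \<rho> v"
    unfolding Val_m_rho_def using \<tau> by (intro SUP_upper) simp
  finally show ?thesis .
qed

lemma optimality_witness_opt_mless:
  assumes wit: "optimality_witness \<phi> s"
  shows "opt_mless (dirac_strat s)"
proof -
  have \<rho>: "mless_strat VMin E (dirac_strat s)"
    using wit unfolding optimality_witness_def by (intro mless_strat_dirac) blast
  have bellman: "bellman_potential \<phi>" using wit unfolding optimality_witness_def by blast
  have "Val_m_rho VMax VMin T E w (dirac_strat s) v = Val_m_bar VMax VMin T E w v" for v
  proof (rule antisym)
    have "Val_m_rho VMax VMin T E w (dirac_strat s) v \<le> ereal (\<phi> v)"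
      unfolding Val_m_rho_def using exp_TP_dirac_le_potential[OF wit] by (intro SUP_least) simp
    also have "\<dots> \<le> Val_m_bar VMax VMin T E w v"
      unfolding Val_m_bar_def using potential_le_Val_m_rho[OF bellman] by (intro INF_greatest) simp
    finally show "Val_m_rho VMax VMin T E w (dirac_strat s) v \<le> Val_m_bar VMax VMin T E w v" .
    show "Val_m_bar VMax VMin T E w v \<le> Val_m_rho VMax VMin T E w (dirac_strat s) v"
      unfolding Val_m_bar_def using \<rho> by (intro INF_lower) simp
  qed
  then show ?thesis unfolding opt_mless_def using \<rho> by blast
qed

lemma reach_chain_pos_path:
  assumes "reach_chain P x > 0"
  shows "\<exists>\<pi>\<in>fplays T E x. chain_prob P \<pi> > 0"
proof (rule ccontr)
  assume "\<not> ?thesis"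
  then have "\<forall>\<pi>\<in>fplays T E x. chain_prob P \<pi> = 0" using chain_prob_nonneg by (metis less_eq_real_def)
  then have "reach_chain P x = 0" unfolding reach_chain_def path_integral_def
    by (intro nn_integral_zero' AE_I2) simp
  then show False using assms by simp
qed

definition det_choices :: "('v \<Rightarrow> 'v) set" where
  "det_choices = {t. \<forall>x \<in> VMax. (x, t x) \<in> E}"

lemma dirac_det_choice: "t \<in> det_choices \<Longrightarrow> mless_strat VMax E (dirac_strat t)"
  unfolding det_choices_def by (rule mless_strat_dirac) blast

text \<open>Maximising the sum of the values over all vertices, rather than a single value, yields a reply
  that is optimal from every vertex at once (\<open>best_response_Max_edges\<close>).\<close>

definition best_response :: "('v \<Rightarrow> 'v pmf) \<Rightarrow> ('v \<Rightarrow> 'v) \<Rightarrow> bool" where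
  "best_response \<rho> t \<longleftrightarrow> t \<in> det_choices \<and> (\<forall>t' \<in> det_choices.
     (\<Sum>x\<in>UNIV. exp_payoff (induced_chain \<rho> (dirac_strat t')) x)
       \<le> (\<Sum>x\<in>UNIV. exp_payoff (induced_chain \<rho> (dirac_strat t)) x))"

lemma best_response_exists: "\<exists>t. best_response \<rho> t"
proof -
  let ?S = "\<lambda>t. \<Sum>x\<in>UNIV. exp_payoff (induced_chain \<rho> (dirac_strat t)) x"
  have "(\<lambda>x. SOME y. (x, y) \<in> E) \<in> det_choices"
    unfolding det_choices_def using successor_exists VMax_iff by (auto intro: someI_ex)
  then have "det_choices \<noteq> {}" by blast
  then have "Max (?S ` det_choices) \<in> ?S ` det_choices" by (intro Max_in) auto
  then obtain t where "t \<in> det_choices" "?S t = Max (?S ` det_choices)" by auto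
  then show ?thesis unfolding best_response_def by auto
qed

context
  fixes \<rho> :: "'v \<Rightarrow> 'v pmf"
  assumes mval: "\<forall>v. Val_m_bar VMax VMin T E w v \<noteq> \<infinity>" and opt: "opt_mless \<rho>"
begin

lemma opt_mless_strat: "mless_strat VMin E \<rho>"
  using opt unfolding opt_mless_def by blast

lemma opt_mless_T_accessible:
  assumes \<tau>: "mless_strat VMax E \<tau>"
  shows "T_accessible (induced_chain \<rho> \<tau>)"
proof -
  have "exp_TP VMin T E w \<rho> \<tau> x \<noteq> \<infinity>" for x
  proof
    assume "exp_TP VMin T E w \<rho> \<tau> x = \<infinity>"
    moreover have "exp_TP VMin T E w \<rho> \<tau> x \<le> Val_m_rho VMax VMin T E w \<rho> x"
      unfolding Val_m_rho_def using \<tau> by (intro SUP_upper) simp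
    ultimately have "Val_m_rho VMax VMin T E w \<rho> x = \<infinity>" by (simp add: top_unique[symmetric])
    then show False using opt mval unfolding opt_mless_def by simp
  qed
  then have "reach_chain (induced_chain \<rho> \<tau>) x \<ge> 1" for x
    unfolding exp_TP_def reach_prob_eq_reach_chain by (metis not_less)
  then show ?thesis
    unfolding T_accessible_def using reach_chain_pos_path less_le_trans[OF zero_less_one] by blast
qed

lemma opt_mless_response_chain:
  assumes "t \<in> det_choices"
  shows "chain_on_E (induced_chain \<rho> (dirac_strat t))" "T_accessible (induced_chain \<rho> (dirac_strat t))"
  using induced_chain_on_E[OF opt_mless_strat dirac_det_choice[OF assms]]
    opt_mless_T_accessible[OF dirac_det_choice[OF assms]] by blast+

lemma response_value_Min:
  assumes "t \<in> det_choices" and "u \<in> VMin"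
  shows "exp_payoff (induced_chain \<rho> (dirac_strat t)) u = (\<Sum>y\<in>E `` {u}. pmf (\<rho> u) y *
     (real_of_int (w u y) + exp_payoff (induced_chain \<rho> (dirac_strat t)) y))"
  using exp_payoff_step[OF opt_mless_response_chain[OF assms(1)] VMin_not_T[OF assms(2)]] assms(2)
  by simp

lemma response_value_Max:
  assumes "t \<in> det_choices" and "x \<in> VMax"
  shows "exp_payoff (induced_chain \<rho> (dirac_strat t)) x
    = real_of_int (w x (t x)) + exp_payoff (induced_chain \<rho> (dirac_strat t)) (t x)"
  using assms VMax_iff
  by (intro exp_payoff_dirac[OF opt_mless_response_chain[OF assms(1)]]) (auto simp: det_choices_def)

context
  fixes t0 :: "'v \<Rightarrow> 'v"
  assumes best: "best_response \<rho> t0"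
begin

abbreviation g0 :: "'v \<Rightarrow> real" where
  "g0 \<equiv> exp_payoff (induced_chain \<rho> (dirac_strat t0))"

lemma best_response_choice: "t0 \<in> det_choices"
  using best unfolding best_response_def by blast

lemma best_response_Max_edges:
  assumes x: "x \<in> VMax" and e: "(x, y) \<in> E"
  shows "real_of_int (w x y) + g0 y \<le> g0 x"
proof (rule ccontr)
  assume less: "\<not> ?thesis"
  define t' where "t' = t0(x := y)"
  have t': "t' \<in> det_choices" using best_response_choice e unfolding det_choices_def t'_def by auto
  let ?g' = "exp_payoff (induced_chain \<rho> (dirac_strat t'))"
  have g0_le: "g0 z \<le> ?g' z" for z
  proof (rule exp_payoff_ge_subsolution[OF opt_mless_response_chain[OF t']])
    show "g0 z \<le> 0" if "z \<in> T" for z using that exp_payoff_T by simp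
    show "g0 z \<le> (\<Sum>y\<in>E `` {z}. pmf (induced_chain \<rho> (dirac_strat t') z) y * (real_of_int (w z y) + g0 y))"
      if z: "z \<notin> T" for z
    proof (cases "z \<in> VMin")
      case True
      then show ?thesis using response_value_Min[OF best_response_choice] by simp
    next
      case False
      then have "z \<in> VMax" using z VMax_iff by blast
      have "(z, t' z) \<in> E" using t' \<open>z \<in> VMax\<close> unfolding det_choices_def by blast
      then have "(\<Sum>y\<in>E `` {z}. pmf (induced_chain \<rho> (dirac_strat t') z) y * (real_of_int (w z y) + g0 y))
          = real_of_int (w z (t' z)) + g0 (t' z)"
        using False sum_pmf_return[of "E `` {z}" "t' z" "\<lambda>y. real_of_int (w z y) + g0 y"] by simp
      then show ?thesis
        using less response_value_Max[OF best_response_choice \<open>z \<in> VMax\<close>] unfolding t'_def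
        by (cases "z = x") auto
    qed
  qed
  have "?g' x = real_of_int (w x y) + ?g' y"
    using exp_payoff_dirac[OF opt_mless_response_chain[OF t']] x e VMax_iff by (simp add: t'_def)
  then have "g0 x < ?g' x" using g0_le[of y] less by simp
  then have "(\<Sum>z\<in>UNIV. g0 z) < (\<Sum>z\<in>UNIV. ?g' z)"
    using g0_le by (intro sum_strict_mono_ex1) auto
  then show False using best t' unfolding best_response_def by (simp add: not_le[symmetric])
qed

lemma exp_payoff_le_best_response_value:
  assumes \<rho>': "mless_strat VMin E \<rho>'" and \<tau>: "mless_strat VMax E \<tau>"
    and acc: "T_accessible (induced_chain \<rho>' \<tau>)"
    and Min: "\<And>u. u \<in> VMin \<Longrightarrow> (\<Sum>y\<in>E `` {u}. pmf (\<rho>' u) y * (real_of_int (w u y) + g0 y)) \<le> g0 u"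
  shows "exp_payoff (induced_chain \<rho>' \<tau>) v \<le> g0 v"
proof (rule exp_payoff_le_supersolution[OF induced_chain_on_E[OF \<rho>' \<tau>] acc])
  show "0 \<le> g0 x" if "x \<in> T" for x using that exp_payoff_T by simp
  show "(\<Sum>y\<in>E `` {x}. pmf (induced_chain \<rho>' \<tau> x) y * (real_of_int (w x y) + g0 y)) \<le> g0 x"
    if x: "x \<notin> T" for x
  proof (cases "x \<in> VMin")
    case True
    then show ?thesis using Min by simp
  next
    case False
    then have "x \<in> VMax" using x VMax_iff by blast
    show ?thesis
      by (rule sum_pmf_le_support[OF induced_chain_on_E[OF \<rho>' \<tau>] x])
        (use best_response_Max_edges[OF \<open>x \<in> VMax\<close>] in blast)
  qed
qed

lemma opt_mless_value: "Val_m_bar VMax VMin T E w v = ereal (g0 v)"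
proof -
  have "Val_m_rho VMax VMin T E w \<rho> v \<le> ereal (g0 v)"
    unfolding Val_m_rho_def
  proof (intro SUP_least, simp)
    fix \<tau> assume \<tau>: "mless_strat VMax E \<tau>"
    have "exp_payoff (induced_chain \<rho> \<tau>) v \<le> g0 v"
      using response_value_Min[OF best_response_choice]
      by (intro exp_payoff_le_best_response_value[OF opt_mless_strat \<tau> opt_mless_T_accessible[OF \<tau>]]) simp
    then show "exp_TP VMin T E w \<rho> \<tau> v \<le> ereal (g0 v)"
      using exp_TP_eq_exp_payoff[OF induced_chain_on_E[OF opt_mless_strat \<tau>] opt_mless_T_accessible[OF \<tau>]]
      by simp
  qed
  moreover have "ereal (g0 v) \<le> Val_m_rho VMax VMin T E w \<rho> v"
  proof -
    have "exp_TP VMin T E w \<rho> (dirac_strat t0) v = ereal (g0 v)"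
      using exp_TP_eq_exp_payoff[OF opt_mless_response_chain[OF best_response_choice]] .
    moreover have "exp_TP VMin T E w \<rho> (dirac_strat t0) v \<le> Val_m_rho VMax VMin T E w \<rho> v"
      unfolding Val_m_rho_def using dirac_det_choice[OF best_response_choice] by (intro SUP_upper) simp
    ultimately show ?thesis by simp
  qed
  ultimately show ?thesis using opt unfolding opt_mless_def by (metis antisym)
qed

lemma half_mix_deviation_value:
  assumes u: "u \<in> VMin" and e: "(u, u') \<in> E" and \<tau>: "mless_strat VMax E \<tau>"
    and improving: "real_of_int (w u u') + g0 u' \<le> g0 u"
  shows "exp_TP VMin T E w (\<rho>(u := half_mix (\<rho> u) u')) \<tau> u
    \<le> ereal ((g0 u + (real_of_int (w u u') + g0 u')) / 2)"
proof -
  let ?\<rho>' = "\<rho>(u := half_mix (\<rho> u) u')"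
  let ?P = "induced_chain ?\<rho>' \<tau>"
  have \<rho>': "mless_strat VMin E ?\<rho>'"
    using opt_mless_strat e unfolding mless_strat_def by (auto simp: set_pmf_half_mix)
  have P: "chain_on_E ?P" by (rule induced_chain_on_E[OF \<rho>' \<tau>])
  have "\<forall>x y. pmf (induced_chain \<rho> \<tau> x) y > 0 \<longrightarrow> pmf (?P x) y > 0"
    by (auto simp: pmf_half_mix add_pos_nonneg)
  then have acc: "T_accessible ?P" by (rule T_accessible_mono[OF _ opt_mless_T_accessible[OF \<tau>]])
  have "(\<Sum>y\<in>E `` {u}. pmf (half_mix (\<rho> u) u') y * (real_of_int (w u y) + g0 y))
      = (\<Sum>y\<in>E `` {u}. pmf (\<rho> u) y * (real_of_int (w u y) + g0 y)) / 2 + (real_of_int (w u u') + g0 u') / 2"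
    using e by (simp add: sum_pmf_half_mix)
  also have "\<dots> = (g0 u + (real_of_int (w u u') + g0 u')) / 2"
    using response_value_Min[OF best_response_choice u] by simp
  finally have Min_u: "(\<Sum>y\<in>E `` {u}. pmf (half_mix (\<rho> u) u') y * (real_of_int (w u y) + g0 y))
      = (g0 u + (real_of_int (w u u') + g0 u')) / 2" .
  have "exp_payoff ?P y \<le> g0 y" for y
  proof (rule exp_payoff_le_best_response_value[OF \<rho>' \<tau> acc])
    fix z assume "z \<in> VMin"
    then show "(\<Sum>y\<in>E `` {z}. pmf (?\<rho>' z) y * (real_of_int (w z y) + g0 y)) \<le> g0 z"
      using Min_u improving response_value_Min[OF best_response_choice] by (cases "z = u") auto
  qed
  then have "exp_payoff ?P u \<le> (\<Sum>y\<in>E `` {u}. pmf (half_mix (\<rho> u) u') y * (real_of_int (w u y) + g0 y))"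
    using exp_payoff_step[OF P acc VMin_not_T[OF u]] u by (auto intro!: sum_mono mult_left_mono)
  then show ?thesis unfolding exp_TP_eq_exp_payoff[OF P acc] Min_u by simp
qed

text \<open>An edge improving on \<open>g0\<close> at a Min vertex would let Min beat \<open>Val_m_bar\<close> by moving half of
  \<open>\<rho> u\<close>'s mass onto it.\<close>

lemma opt_mless_Min_edges:
  assumes u: "u \<in> VMin" and e: "(u, u') \<in> E"
  shows "g0 u \<le> real_of_int (w u u') + g0 u'"
proof (rule ccontr)
  assume "\<not> ?thesis"
  then have improving: "real_of_int (w u u') + g0 u' < g0 u" by simp
  let ?\<rho>' = "\<rho>(u := half_mix (\<rho> u) u')"
  have "mless_strat VMin E ?\<rho>'"
    using opt_mless_strat e u unfolding mless_strat_def by (auto simp: set_pmf_half_mix)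
  then have "Val_m_bar VMax VMin T E w u \<le> Val_m_rho VMax VMin T E w ?\<rho>' u"
    unfolding Val_m_bar_def by (intro INF_lower) simp
  also have "\<dots> \<le> ereal ((g0 u + (real_of_int (w u u') + g0 u')) / 2)"
    unfolding Val_m_rho_def using half_mix_deviation_value[OF u e] improving
    by (intro SUP_least) simp
  finally show False using improving opt_mless_value[of u] by simp
qed

lemma opt_mless_support_tight:
  assumes u: "u \<in> VMin" and y: "y \<in> set_pmf (\<rho> u)"
  shows "g0 u = real_of_int (w u y) + g0 y"
proof -
  have E_u: "set_pmf (\<rho> u) \<subseteq> E `` {u}" using opt_mless_strat u unfolding mless_strat_def by blast
  let ?d = "\<lambda>y'. pmf (\<rho> u) y' * (real_of_int (w u y') + g0 y' - g0 u)"
  have "(\<Sum>y'\<in>E `` {u}. ?d y')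
      = (\<Sum>y'\<in>E `` {u}. pmf (\<rho> u) y' * (real_of_int (w u y') + g0 y')) - (\<Sum>y'\<in>E `` {u}. pmf (\<rho> u) y') * g0 u"
    by (simp add: right_diff_distrib sum_subtractf sum_distrib_right)
  also have "\<dots> = 0"
    using response_value_Min[OF best_response_choice u]
      sum_pmf_succ[OF induced_chain_on_E[OF opt_mless_strat dirac_det_choice[OF best_response_choice]]
        VMin_not_T[OF u]] u
    by simp
  finally have "\<forall>y'\<in>E `` {u}. ?d y' = 0"
    using opt_mless_Min_edges[OF u] by (subst (asm) sum_nonneg_eq_0_iff) auto
  moreover have "y \<in> E `` {u}" using E_u y by blast
  ultimately have "?d y = 0" by blast
  moreover have "pmf (\<rho> u) y \<noteq> 0" using y by (simp add: set_pmf_iff)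
  ultimately show ?thesis by simp
qed

end

lemma opt_mless_no_trap:
  assumes X: "trap (\<lambda>u. set_pmf (\<rho> u)) X"
  shows "X = {}"
proof (rule ccontr)
  assume "X \<noteq> {}"
  then obtain v where v: "v \<in> X" by blast
  obtain t where t: "\<And>x. x \<in> VMax \<Longrightarrow> (x, t x) \<in> E \<and> (x \<in> X \<longrightarrow> t x \<in> X)"
    using trap_Max_choice[OF X] by blast
  then have t_choice: "t \<in> det_choices" unfolding det_choices_def by blast
  let ?P = "induced_chain \<rho> (dirac_strat t)"
  obtain \<pi> where \<pi>: "\<pi> \<in> fplays T E v" "chain_prob ?P \<pi> > 0"
    using opt_mless_response_chain(2)[OF t_choice] unfolding T_accessible_def by blast
  have ne: "\<pi> \<noteq> []" "hd \<pi> = v" "last \<pi> \<in> T" using \<pi>(1) unfolding fplays_def by auto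
  have "i < length \<pi> \<longrightarrow> \<pi> ! i \<in> X" for i
  proof (induction i)
    case 0
    then show ?case using ne v by (simp add: hd_conv_nth)
  next
    case (Suc i)
    show ?case
    proof
      assume i: "Suc i < length \<pi>"
      then have xi: "\<pi> ! i \<in> X" using Suc by simp
      have pos: "pmf (?P (\<pi> ! i)) (\<pi> ! Suc i) > 0" using chain_prob_pos_transition[OF \<pi>(2)] i by simp
      show "\<pi> ! Suc i \<in> X"
      proof (cases "\<pi> ! i \<in> VMin")
        case True
        then have "\<pi> ! Suc i \<in> set_pmf (\<rho> (\<pi> ! i))" using pos by (simp add: set_pmf_iff)
        then show ?thesis using X xi True unfolding trap_def by blast
      next
        case False
        then have "\<pi> ! i \<in> VMax" using xi X VMax_iff unfolding trap_def by blast
        moreover have "\<pi> ! Suc i = t (\<pi> ! i)"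
          using pos False by (simp add: indicator_def split: if_splits)
        ultimately show ?thesis using t xi by simp
      qed
    qed
  qed
  then have "last \<pi> \<in> X" using ne by (simp add: last_conv_nth)
  then show False using X ne(3) unfolding trap_def by blast
qed

lemma opt_mless_witness: "\<exists>\<phi> s. optimality_witness \<phi> s"
proof -
  obtain t0 where best: "best_response \<rho> t0" using best_response_exists by blast
  let ?g = "exp_payoff (induced_chain \<rho> (dirac_strat t0))"
  obtain s rk where rk: "attractor_ranking s rk" and s: "\<forall>u \<in> VMin. s u \<in> set_pmf (\<rho> u)"
    using attractor_ranking_exists[of "\<lambda>u. set_pmf (\<rho> u)"] opt_mless_no_trap by blast
  have s_E: "(u, s u) \<in> E" if "u \<in> VMin" for u
    using s opt_mless_strat that unfolding mless_strat_def by blast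
  have "bellman_potential ?g"
    unfolding bellman_potential_def
    using exp_payoff_T opt_mless_Min_edges[OF best] best_response_Max_edges[OF best]
      response_value_Max[OF best_response_choice[OF best]] best_response_choice[OF best]
    unfolding det_choices_def by blast
  moreover have "real_of_int (w u (s u)) + ?g (s u) \<le> ?g u" if "u \<in> VMin" for u
    using opt_mless_support_tight[OF best that, of "s u"] s that by simp
  ultimately show ?thesis unfolding optimality_witness_def using rk s_E by blast
qed

end

end

theorem proposition24:
  fixes VMax VMin T :: "'v::finite set"
    and E :: "('v \<times> 'v) set"
    and w :: "'v \<Rightarrow> 'v \<Rightarrow> int"
  assumes game: "sp_game VMax VMin T E"
    and fin_val: "\<forall>v. Val_d VMax VMin T E w v \<noteq> -\<infinity> \<and> Val_d VMax VMin T E w v \<noteq> \<infinity>"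
    and mval: "\<forall>v. Val_m_bar VMax VMin T E w v \<noteq> \<infinity>"
  shows "((\<exists>\<sigma>. det_strat VMin E \<sigma> \<and> memoryless_det \<sigma> \<and>
            (\<forall>v. Val_sigma VMax VMin T E w \<sigma> v = Val_d VMax VMin T E w v))
          \<longleftrightarrow>
          (\<exists>\<rho>. mless_strat VMin E \<rho> \<and>
            (\<forall>v. Val_m_rho VMax VMin T E w \<rho> v = Val_m_bar VMax VMin T E w v)))
       \<and>
         ((\<exists>\<rho>. mless_strat VMin E \<rho> \<and>
            (\<forall>v. Val_m_rho VMax VMin T E w \<rho> v = Val_m_bar VMax VMin T E w v))
          \<longleftrightarrow>
          ((\<forall>v. f_iter VMin T E w (CARD('v) - 1) v = Val_d VMax VMin T E w v
                \<and> f_iter VMin T E w (CARD('v)) v = Val_d VMax VMin T E w v)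
           \<and> (\<exists>\<sigma>. det_strat VMin (Gtilde_edges VMin T E w (CARD('v) - 1)) \<sigma> \<and>
                 (\<forall>v \<tau>. det_strat VMax (Gtilde_edges VMin T E w (CARD('v) - 1)) \<tau> \<longrightarrow>
                        (\<exists>n. play_vertex VMin \<sigma> \<tau> v n \<in> T)))))"
proof -
  interpret spg VMax VMin T E w by unfold_locales (rule game)
  have "(\<exists>\<sigma>. opt_mless_det \<sigma>) \<longleftrightarrow> (\<exists>\<phi> s. optimality_witness \<phi> s)"
    using opt_mless_det_imp_stable_reaching[OF fin_val] stable_reaching_witness[OF fin_val]
      optimality_witness_opt_mless_det by blast
  moreover have "(\<exists>\<rho>. opt_mless \<rho>) \<longleftrightarrow> (\<exists>\<phi> s. optimality_witness \<phi> s)"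
    using opt_mless_witness[OF mval] optimality_witness_opt_mless by blast
  moreover have "(iterates_stable \<and> (\<exists>\<sigma>. Gtilde_reaching \<sigma>)) \<longleftrightarrow> (\<exists>\<phi> s. optimality_witness \<phi> s)"
    using opt_mless_det_imp_stable_reaching[OF fin_val] stable_reaching_witness[OF fin_val]
      optimality_witness_opt_mless_det by blast
  ultimately show ?thesis
    unfolding opt_mless_det_def opt_mless_def iterates_stable_def Gtilde_reaching_def by blast
qed

end
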